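(* Let $f_1,\dots,f_n:\mathbb{R}^d\to\mathbb{R}$ be convex functions all of whose subgradients have Euclidean norm at most $L$, let $\Omega\subseteq\mathbb{R}^d$ be a closed convex set of diameter at most $D$, let $F(x)=\frac1n\sum_{i=1}^n f_i(x)$, $F^*=\min_{x\in\Omega}F(x)$, and let $x^*\in\arg\min_{x\in\Omega}F(x)$. Let $W$ be an $n\times n$ nonnegative doubly stochastic matrix with positive diagonal whose positive entries define a strongly connected directed graph, and let $\sigma<1$ be its second-largest singular value. Let the step-size $(\alpha(t))_{t\ge1}$ be positive and nonincreasing with $\sum_t\alpha(t)=+\infty$, $\sum_t\alpha^2(t)<\infty$, and suppose there are constants $C_\alpha, C_\alpha'$ with $\sum_{k=1}^t\alpha(k)\le C_\alpha\sum_{k=\lceil t/2\rceil}^t\alpha(k)$ and $\alpha(\lfloor t/2\rfloor)\le C_\alpha'\alpha(t)$ for all positive integers $t$. Let $\alpha_{\max}=\max_t\alpha(t)$. Consider the iteration $$x(t+1)=W\,P_\Omega\big[x(t)-\alpha(t)g(t)\big],\quad t\ge1,$$ where $x(t)$ is $n\times d$ with rows $x_i(t)$, all rows of $x(1)$ equal to a common point of $\Omega$, $g(t)$ has rows $g_i(t)$ with $g_i(t)$ a subgradient of $f_i$ at $x_i(t)$, and $P_\Omega$ acts row-wise as Euclidean projection onto $\Omega$. Let $\overline{x}(t)=\frac1n\sum_i x_i(t)$, $t'=\lfloor t/2\rfloor$, and $x'_\alpha(t)=\frac{\sum_{k=t'}^t\alpha(k)\overline{x}(k)}{\sum_{k=t'}^t\alpha(k)}$.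 Then there is an absolute constant $c>0$ such that, whenever $t$ satisfies $$\sum_{k=\lfloor t/2\rfloor}^{\infty}\alpha^2(k)\le\frac{D^2(1-\sigma)}{10C_\alpha'L^2}\quad\text{and}\quad t\ge\frac{c}{1-\sigma}\log\Big[\frac{(1-\sigma)\,t\,\alpha_{\max}}{C_\alpha'\alpha(t)}\Big],$$ we have $$F(x'_\alpha(t))-F^*\le\frac{D^2C_\alpha}{\sum_{k=1}^t\alpha(k)}.$$ Moreover, if $\alpha(t)=1/t^\beta$ with $\beta\in(1/2,1)$, there are constants $c_\beta, C_\beta>0$ depending only on $\beta$ such that whenever $t$ satisfies the second (logarithmic) condition above and additionally $t^{2\beta-1}\ge c_\beta\frac{L^2}{D^2(1-\sigma)}$, we have $F(x'_\alpha(t))-F^*\le C_\beta\frac{D^2}{t^{1-\beta}}$.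
   Context: $P_\Omega$ denotes Euclidean projection onto $\Omega$. The second-largest singular value $\sigma$ of $W$ satisfies $\sigma<1$ under the stated assumptions on $W$ (the largest singular value is $1$, attained at the all-ones vector). *)

theory Defs
  imports "HOL-Analysis.Analysis"
begin

text \<open>Since the constants c, c_beta, C_beta must be
  uniform in the dimension d and the number of agents n, both are natural numbers
  quantified inside the statement.  A vector of R^d is a function nat => real that
  vanishes outside {..<d}; an n x n matrix is a function nat => nat => real read on
  indices below n; agents are indexed by {..<n}.\<close>

definition Rd :: "nat \<Rightarrow> (nat \<Rightarrow> real) set" where
  "Rd d = {v. \<forall>j\<ge>d. v j = 0}"

definition vdiff :: "(nat \<Rightarrow> real) \<Rightarrow> (nat \<Rightarrow> real) \<Rightarrow> (nat \<Rightarrow> real)" where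
  "vdiff u v = (\<lambda>j. u j - v j)"

definition vscale :: "real \<Rightarrow> (nat \<Rightarrow> real) \<Rightarrow> (nat \<Rightarrow> real)" where
  "vscale a v = (\<lambda>j. a * v j)"

definition ip :: "nat \<Rightarrow> (nat \<Rightarrow> real) \<Rightarrow> (nat \<Rightarrow> real) \<Rightarrow> real" where
  "ip d u v = (\<Sum>j<d. u j * v j)"

definition enorm :: "nat \<Rightarrow> (nat \<Rightarrow> real) \<Rightarrow> real" where
  "enorm d v = L2_set v {..<d}"

definition cvx_fun :: "nat \<Rightarrow> ((nat \<Rightarrow> real) \<Rightarrow> real) \<Rightarrow> bool" where
  "cvx_fun d f \<longleftrightarrow> (\<forall>x\<in>Rd d. \<forall>y\<in>Rd d. \<forall>u::real. 0 \<le> u \<and> u \<le> 1 \<longrightarrow>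
      f (\<lambda>j. u * x j + (1 - u) * y j) \<le> u * f x + (1 - u) * f y)"

definition cvx_set :: "nat \<Rightarrow> (nat \<Rightarrow> real) set \<Rightarrow> bool" where
  "cvx_set d S \<longleftrightarrow> S \<subseteq> Rd d \<and> (\<forall>x\<in>S. \<forall>y\<in>S. \<forall>u::real. 0 \<le> u \<and> u \<le> 1 \<longrightarrow>
      (\<lambda>j. u * x j + (1 - u) * y j) \<in> S)"

definition closed_set :: "nat \<Rightarrow> (nat \<Rightarrow> real) set \<Rightarrow> bool" where
  "closed_set d S \<longleftrightarrow> S \<subseteq> Rd d \<and> (\<forall>X y. (\<forall>k. X k \<in> S) \<and> y \<in> Rd d \<and>
      (\<lambda>k. enorm d (vdiff (X k) y)) \<longlonglongrightarrow> 0 \<longrightarrow> y \<in> S)"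

definition subgrad :: "nat \<Rightarrow> ((nat \<Rightarrow> real) \<Rightarrow> real) \<Rightarrow> (nat \<Rightarrow> real) \<Rightarrow> (nat \<Rightarrow> real) \<Rightarrow> bool" where
  "subgrad d f x g \<longleftrightarrow> g \<in> Rd d \<and> (\<forall>y\<in>Rd d. f y \<ge> f x + ip d g (vdiff y x))"

definition proj :: "nat \<Rightarrow> (nat \<Rightarrow> real) set \<Rightarrow> (nat \<Rightarrow> real) \<Rightarrow> (nat \<Rightarrow> real)" where
  "proj d S y = (SOME p. p \<in> S \<and> (\<forall>q\<in>S. enorm d (vdiff y p) \<le> enorm d (vdiff y q)))"

text \<open>sigma is the second-largest singular value of the n x n matrix W: the singular
  values are the numbers s_k \<ge> 0 such that s_k^2 are the eigenvalues (with multiplicity)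
  of W^T W, i.e. W^T W has an orthonormal eigenbasis u_0..u_{n-1} with eigenvalues s_k^2;
  sigma is the largest of them after removing one copy of the largest.\<close>
definition second_singular_value :: "nat \<Rightarrow> (nat \<Rightarrow> nat \<Rightarrow> real) \<Rightarrow> real \<Rightarrow> bool" where
  "second_singular_value n W \<sigma> \<longleftrightarrow> (\<exists>(u::nat \<Rightarrow> nat \<Rightarrow> real) (s::nat \<Rightarrow> real) p.
      (\<forall>k<n. \<forall>l<n. (\<Sum>m<n. u k m * u l m) = (if k = l then 1 else 0)) \<and>
      (\<forall>k<n. 0 \<le> s k \<and>
         (\<forall>i<n. (\<Sum>j<n. (\<Sum>m<n. W m i * W m j) * u k j) = (s k)\<^sup>2 * u k i)) \<and>
      p < n \<and> (\<forall>k<n. s k \<le> s p) \<and> \<sigma> = Max (s ` ({..<n} - {p})))"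

definition doubly_stochastic :: "nat \<Rightarrow> (nat \<Rightarrow> nat \<Rightarrow> real) \<Rightarrow> bool" where
  "doubly_stochastic n W \<longleftrightarrow> (\<forall>i<n. \<forall>j<n. 0 \<le> W i j) \<and>
      (\<forall>i<n. (\<Sum>j<n. W i j) = 1) \<and> (\<forall>j<n. (\<Sum>i<n. W i j) = 1)"

definition strongly_connected :: "nat \<Rightarrow> (nat \<Rightarrow> nat \<Rightarrow> real) \<Rightarrow> bool" where
  "strongly_connected n W \<longleftrightarrow>
     (\<forall>i<n. \<forall>j<n. (i, j) \<in> {(a, b). a < n \<and> b < n \<and> W a b > 0}\<^sup>*)"

definition Favg :: "nat \<Rightarrow> (nat \<Rightarrow> (nat \<Rightarrow> real) \<Rightarrow> real) \<Rightarrow> (nat \<Rightarrow> real) \<Rightarrow> real" where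
  "Favg n f y = (1 / real n) * (\<Sum>i<n. f i y)"

text \<open>xbar(t) = (1/n) sum_i x_i(t); x t i is row i of x(t).\<close>
definition xbar :: "nat \<Rightarrow> (nat \<Rightarrow> nat \<Rightarrow> (nat \<Rightarrow> real)) \<Rightarrow> nat \<Rightarrow> (nat \<Rightarrow> real)" where
  "xbar n x t = (\<lambda>j. (1 / real n) * (\<Sum>i<n. x t i j))"

definition xalpha :: "nat \<Rightarrow> (nat \<Rightarrow> real) \<Rightarrow> (nat \<Rightarrow> nat \<Rightarrow> (nat \<Rightarrow> real)) \<Rightarrow> nat \<Rightarrow> (nat \<Rightarrow> real)" where
  "xalpha n \<alpha> x t = (\<lambda>j. (\<Sum>k=t div 2..t. \<alpha> k * xbar n x k j) / (\<Sum>k=t div 2..t. \<alpha> k))"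

definition dsgd_setting ::
  "nat \<Rightarrow> nat \<Rightarrow> (nat \<Rightarrow> (nat \<Rightarrow> real) \<Rightarrow> real) \<Rightarrow> real \<Rightarrow> (nat \<Rightarrow> real) set \<Rightarrow> real \<Rightarrow>
   (nat \<Rightarrow> nat \<Rightarrow> real) \<Rightarrow> real \<Rightarrow> (nat \<Rightarrow> real) \<Rightarrow> real \<Rightarrow> real \<Rightarrow>
   (nat \<Rightarrow> nat \<Rightarrow> (nat \<Rightarrow> real)) \<Rightarrow> (nat \<Rightarrow> nat \<Rightarrow> (nat \<Rightarrow> real)) \<Rightarrow> (nat \<Rightarrow> real) \<Rightarrow> bool" where
  "dsgd_setting n d f L \<Omega> D W \<sigma> \<alpha> Ca Ca' x g xs \<longleftrightarrow>
     \<comment> \<open>dimensions\<close>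
     1 \<le> d \<and> 2 \<le> n \<and>
     \<comment> \<open>convex functions with subgradients bounded by L\<close>
     (\<forall>i<n. cvx_fun d (f i)) \<and>
     (\<forall>i<n. \<forall>y\<in>Rd d. \<forall>v. subgrad d (f i) y v \<longrightarrow> enorm d v \<le> L) \<and>
     \<comment> \<open>closed convex set of diameter at most D\<close>
     cvx_set d \<Omega> \<and> closed_set d \<Omega> \<and>
     (\<forall>y\<in>\<Omega>. \<forall>z\<in>\<Omega>. enorm d (vdiff y z) \<le> D) \<and>
     \<comment> \<open>x* is a minimiser of F over Omega\<close>
     xs \<in> \<Omega> \<and> (\<forall>y\<in>\<Omega>. Favg n f xs \<le> Favg n f y) \<and>
     \<comment> \<open>mixing matrix\<close>
     doubly_stochastic n W \<and> (\<forall>i<n. 0 < W i i) \<and> strongly_connected n W \<and>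
     second_singular_value n W \<sigma> \<and> \<sigma> < 1 \<and>
     \<comment> \<open>step sizes, indexed from 1\<close>
     (\<forall>k\<ge>1. 0 < \<alpha> k) \<and> (\<forall>k\<ge>1. \<alpha> (Suc k) \<le> \<alpha> k) \<and>
     filterlim (\<lambda>T. \<Sum>k=1..T. \<alpha> k) at_top sequentially \<and>
     summable (\<lambda>k. (\<alpha> (Suc k))\<^sup>2) \<and>
     (\<forall>t\<ge>1. (\<Sum>k=1..t. \<alpha> k) \<le> Ca * (\<Sum>k=(t + 1) div 2..t. \<alpha> k)) \<and>
     (\<forall>t\<ge>2. \<alpha> (t div 2) \<le> Ca' * \<alpha> t) \<and>
     \<comment> \<open>the iteration\<close>
     (\<exists>x0\<in>\<Omega>. \<forall>i<n. x 1 i = x0) \<and>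
     (\<forall>t\<ge>1. \<forall>i<n. subgrad d (f i) (x t i) (g t i)) \<and>
     (\<forall>t\<ge>1. \<forall>i<n. x (Suc t) i =
        (\<lambda>j. \<Sum>m<n. W i m * proj d \<Omega> (vdiff (x t m) (vscale (\<alpha> t) (g t m))) j))"

end

theory Submission
  imports Defs "Jordan_Normal_Form.Determinant"
begin

(* Each agent takes a projected subgradient step and the results are averaged by W.  Comparing
   the local steps with xs gives the classical descent inequality for the mean squared distance
   of the agents to xs, except that the subgradients are taken at the agents' own iterates and
   not at their average; this costs L times the mean deviation of the agents from the average.
   Since W is doubly stochastic it preserves the average and contracts mean-zero vectors by its
   second singular value sigma, so the deviation at step k is at most
   L * sum_{s<k} sigma^(k-s) alpha(s).  Summing the descent inequality over the window
   [t/2, t] and applying Jensen's inequality to the weighted average x'_alpha(t) bounds the gap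
   by (D^2 + L^2 sum alpha^2 + 2 L^2 sum alpha * deviation) / (2 sum alpha).  Under either set of
   hypotheses on t the error terms are at most a constant times D^2: for general step sizes the
   early steps are killed by sigma^(t/4) (the logarithmic condition) and the late ones by the
   tail of sum alpha^2; for alpha(k) = k^-beta all window sums are explicit. *)

section \<open>Euclidean geometry of the coordinate model\<close>

definition sqnorm :: "nat \<Rightarrow> (nat \<Rightarrow> real) \<Rightarrow> real" where
  "sqnorm d v = (\<Sum>j<d. (v j)\<^sup>2)"

lemma sqnorm_nonneg: "0 \<le> sqnorm d v"
  unfolding sqnorm_def by (simp add: sum_nonneg)

lemma enorm_eq_sqrt_sqnorm: "enorm d v = sqrt (sqnorm d v)"
  unfolding enorm_def sqnorm_def L2_set_def by simp

lemma enorm_nonneg: "0 \<le> enorm d v"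
  by (simp add: enorm_eq_sqrt_sqnorm sqnorm_nonneg)

lemma enorm_power2: "(enorm d v)\<^sup>2 = sqnorm d v"
  by (simp add: enorm_eq_sqrt_sqnorm sqnorm_nonneg)

lemma enorm_le_iff_sqnorm_le: "enorm d u \<le> enorm d v \<longleftrightarrow> sqnorm d u \<le> sqnorm d v"
  by (simp add: enorm_eq_sqrt_sqnorm sqnorm_nonneg)

lemma sqnorm_le_power2: "enorm d v \<le> c \<Longrightarrow> sqnorm d v \<le> c\<^sup>2"
  by (metis enorm_nonneg enorm_power2 power_mono)

lemma ip_commute: "ip d u v = ip d v u"
  unfolding ip_def by (simp add: mult.commute)

lemma ip_scale_right: "ip d g (\<lambda>j. a * u j) = a * ip d g u"
  unfolding ip_def by (simp add: algebra_simps sum_distrib_left)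

lemma ip_add_right: "ip d g (\<lambda>j. u j + w j) = ip d g u + ip d g w"
  unfolding ip_def by (simp add: algebra_simps sum.distrib)

lemma ip_vdiff_swap: "ip d h (vdiff a b) = - ip d h (vdiff b a)"
  unfolding ip_def vdiff_def by (simp add: algebra_simps sum_negf[symmetric])

lemma ip_le_enorm_mult: "ip d u v \<le> enorm d u * enorm d v"
proof -
  have "ip d u v \<le> (\<Sum>j<d. \<bar>u j\<bar> * \<bar>v j\<bar>)"
    unfolding ip_def by (intro sum_mono) (simp add: abs_mult[symmetric])
  also have "\<dots> \<le> enorm d u * enorm d v"
    unfolding enorm_def by (rule L2_set_mult_ineq)
  finally show ?thesis .
qed

lemma sqnorm_diff: "sqnorm d (\<lambda>j. a j - b j) = sqnorm d a - 2 * ip d a b + sqnorm d b"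
  unfolding sqnorm_def ip_def
  by (simp add: power2_diff sum.distrib sum_subtractf sum_distrib_left mult.assoc)

lemma sqnorm_scale: "sqnorm d (\<lambda>j. a * v j) = a\<^sup>2 * sqnorm d v"
  unfolding sqnorm_def by (simp add: power_mult_distrib sum_distrib_left)

lemma enorm_vdiff_commute: "enorm d (vdiff a b) = enorm d (vdiff b a)"
  unfolding enorm_eq_sqrt_sqnorm sqnorm_def vdiff_def by (simp add: power2_commute)

lemma enorm_vdiff_triangle: "enorm d (vdiff y z) \<le> enorm d (vdiff y p) + enorm d (vdiff p z)"
proof -
  have "vdiff y z = (\<lambda>j. vdiff y p j + vdiff p z j)"
    unfolding vdiff_def by auto
  then show ?thesis
    unfolding enorm_def by (metis L2_set_triangle_ineq)
qed

lemma power2_le_sqnorm: "j < d \<Longrightarrow> (v j)\<^sup>2 \<le> sqnorm d v"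
  unfolding sqnorm_def by (rule member_le_sum) auto

lemma Rd_eqI:
  assumes "u \<in> Rd d" "v \<in> Rd d" and "enorm d (vdiff u v) \<le> 0"
  shows "u = v"
proof
  fix j
  have "sqnorm d (vdiff u v) = 0"
    using assms(3) sqnorm_nonneg[of d "vdiff u v"] by (simp add: enorm_eq_sqrt_sqnorm)
  then have "\<forall>j<d. (u j - v j)\<^sup>2 = 0"
    unfolding sqnorm_def vdiff_def by (subst (asm) sum_nonneg_eq_0_iff) auto
  then show "u j = v j"
    using assms(1,2) unfolding Rd_def by (cases "j < d") auto
qed

lemma Rd_add_scaled: "x \<in> Rd d \<Longrightarrow> v \<in> Rd d \<Longrightarrow> (\<lambda>j. x j + b * v j) \<in> Rd d"
  unfolding Rd_def by auto

lemma vdiff_in_Rd: "u \<in> Rd d \<Longrightarrow> v \<in> Rd d \<Longrightarrow> vdiff u v \<in> Rd d"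
  unfolding Rd_def vdiff_def by auto

lemma weighted_mean_power2_le:
  fixes w b :: "nat \<Rightarrow> real"
  assumes "\<forall>m<N. 0 \<le> w m" and "(\<Sum>m<N. w m) = 1"
  shows "(\<Sum>m<N. w m * b m)\<^sup>2 \<le> (\<Sum>m<N. w m * (b m)\<^sup>2)"
proof -
  define B where "B = (\<Sum>m<N. w m * b m)"
  have "0 \<le> (\<Sum>m<N. w m * (b m - B)\<^sup>2)"
    using assms(1) by (intro sum_nonneg) auto
  also have "\<dots> = (\<Sum>m<N. w m * (b m)\<^sup>2) - 2 * B * (\<Sum>m<N. w m * b m) + B\<^sup>2 * (\<Sum>m<N. w m)"
    by (simp add: power2_diff algebra_simps sum.distrib sum_subtractf sum_distrib_left sum_distrib_right)
  also have "\<dots> = (\<Sum>m<N. w m * (b m)\<^sup>2) - B\<^sup>2"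
    using assms(2) unfolding B_def by (simp add: power2_eq_square)
  finally show ?thesis unfolding B_def by simp
qed

lemma sum_power2_deviation_le:
  fixes e :: "nat \<Rightarrow> real"
  shows "(\<Sum>m<n. (e m - (1 / real n) * (\<Sum>l<n. e l))\<^sup>2) \<le> (\<Sum>m<n. (e m)\<^sup>2)"
proof (cases "n = 0")
  case False
  define E where "E = (1 / real n) * (\<Sum>l<n. e l)"
  have sum_e: "(\<Sum>l<n. e l) = real n * E"
    unfolding E_def using False by simp
  have "(\<Sum>m<n. (e m - E)\<^sup>2) = (\<Sum>m<n. (e m)\<^sup>2) - 2 * E * (\<Sum>m<n. e m) + real n * E\<^sup>2"
    by (simp add: power2_diff sum.distrib sum_subtractf sum_distrib_left algebra_simps)
  also have "\<dots> = (\<Sum>m<n. (e m)\<^sup>2) - real n * E\<^sup>2"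
    unfolding sum_e by (simp add: power2_eq_square)
  finally show ?thesis
    unfolding E_def by simp
qed simp

lemma sqrt_double_sum_add_le:
  fixes a b :: "nat \<Rightarrow> nat \<Rightarrow> real"
  shows "sqrt (\<Sum>m<n. \<Sum>j<d. (a m j + b m j)\<^sup>2) \<le>
    sqrt (\<Sum>m<n. \<Sum>j<d. (a m j)\<^sup>2) + sqrt (\<Sum>m<n. \<Sum>j<d. (b m j)\<^sup>2)"
proof -
  have L2: "sqrt (\<Sum>m<n. \<Sum>j<d. (c m j)\<^sup>2) = L2_set (\<lambda>(m, j). c m j) ({..<n} \<times> {..<d})"
    for c :: "nat \<Rightarrow> nat \<Rightarrow> real"
    unfolding L2_set_def by (simp add: sum.cartesian_product case_prod_unfold)
  have "L2_set (\<lambda>p. (\<lambda>(m, j). a m j) p + (\<lambda>(m, j). b m j) p) ({..<n} \<times> {..<d}) \<le>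
      L2_set (\<lambda>(m, j). a m j) ({..<n} \<times> {..<d}) + L2_set (\<lambda>(m, j). b m j) ({..<n} \<times> {..<d})"
    by (rule L2_set_triangle_ineq)
  moreover have "(\<lambda>p. (\<lambda>(m, j). a m j) p + (\<lambda>(m, j). b m j) p) = (\<lambda>(m, j). a m j + b m j)"
    by auto
  ultimately show ?thesis
    by (simp add: L2)
qed

section \<open>Subgradients of convex functions\<close>

definition diff_quot :: "((nat \<Rightarrow> real) \<Rightarrow> real) \<Rightarrow> (nat \<Rightarrow> real) \<Rightarrow> (nat \<Rightarrow> real) \<Rightarrow> real \<Rightarrow> real" where
  "diff_quot f x v \<tau> = (f (\<lambda>j. x j + \<tau> * v j) - f x) / \<tau>"

text \<open>For convex \<open>f\<close> the difference quotients increase with \<open>\<tau>\<close>, so their infimum is the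
  one-sided directional derivative; it is sublinear in the direction.\<close>
definition dir_deriv :: "((nat \<Rightarrow> real) \<Rightarrow> real) \<Rightarrow> (nat \<Rightarrow> real) \<Rightarrow> (nat \<Rightarrow> real) \<Rightarrow> real" where
  "dir_deriv f x v = Inf (diff_quot f x v ` {0<..})"

lemma cvx_funD:
  "cvx_fun d f \<Longrightarrow> x \<in> Rd d \<Longrightarrow> y \<in> Rd d \<Longrightarrow> 0 \<le> u \<Longrightarrow> u \<le> 1 \<Longrightarrow>
    f (\<lambda>j. u * x j + (1 - u) * y j) \<le> u * f x + (1 - u) * f y"
  unfolding cvx_fun_def by blast

context
  fixes d f x
  assumes cvx: "cvx_fun d f" and x_Rd: "x \<in> Rd d"
begin

lemma diff_quot_lower_bound:
  assumes v_Rd: "v \<in> Rd d" and \<tau>: "0 < \<tau>"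
  shows "f x - f (\<lambda>j. x j - v j) \<le> diff_quot f x v \<tau>"
proof -
  let ?a = "\<lambda>j. x j + \<tau> * v j" and ?b = "\<lambda>j. x j - v j"
  define u where "u = 1 / (1 + \<tau>)"
  have "?a \<in> Rd d" "?b \<in> Rd d"
    using Rd_add_scaled[OF x_Rd v_Rd, of \<tau>] Rd_add_scaled[OF x_Rd v_Rd, of "-1"] by simp_all
  moreover have "0 \<le> u" "u \<le> 1"
    using \<tau> unfolding u_def by auto
  moreover have "(\<lambda>j. u * ?a j + (1 - u) * ?b j) = x"
  proof
    fix j
    have "u * ?a j + (1 - u) * ?b j = x j + (u * \<tau> - (1 - u)) * v j"
      by (simp add: algebra_simps)
    also have "u * \<tau> - (1 - u) = 0"
      using \<tau> unfolding u_def by (simp add: field_simps)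
    finally show "u * ?a j + (1 - u) * ?b j = x j"
      by simp
  qed
  ultimately have "f x \<le> u * f ?a + (1 - u) * f ?b"
    using cvx_funD[OF cvx] by metis
  then have "(1 + \<tau>) * f x \<le> (1 + \<tau>) * (u * f ?a + (1 - u) * f ?b)"
    using \<tau> by simp
  also have "\<dots> = ((1 + \<tau>) * u) * f ?a + ((1 + \<tau>) * (1 - u)) * f ?b"
    by (simp add: algebra_simps)
  also have "\<dots> = f ?a + \<tau> * f ?b"
  proof -
    have "(1 + \<tau>) * u = 1" "(1 + \<tau>) * (1 - u) = \<tau>"
      using \<tau> unfolding u_def by (simp_all add: field_simps)
    then show ?thesis
      by simp
  qed
  finally have "\<tau> * (f x - f ?b) \<le> f ?a - f x"
    by (simp add: algebra_simps)
  then show ?thesis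
    unfolding diff_quot_def using \<tau> by (simp add: pos_le_divide_eq mult.commute)
qed

lemma diff_quot_mono:
  assumes v_Rd: "v \<in> Rd d" and s: "0 < s" "s \<le> \<tau>"
  shows "diff_quot f x v s \<le> diff_quot f x v \<tau>"
proof -
  let ?a = "\<lambda>j. x j + \<tau> * v j"
  define u where "u = s / \<tau>"
  have "?a \<in> Rd d"
    by (rule Rd_add_scaled[OF x_Rd v_Rd])
  moreover have "0 \<le> u" "u \<le> 1"
    using s unfolding u_def by auto
  moreover have "(\<lambda>j. u * ?a j + (1 - u) * x j) = (\<lambda>j. x j + s * v j)"
    using s unfolding u_def by (auto simp: fun_eq_iff field_simps)
  ultimately have "f (\<lambda>j. x j + s * v j) \<le> u * f ?a + (1 - u) * f x"
    using cvx_funD[OF cvx _ x_Rd] by metis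
  then have "(f (\<lambda>j. x j + s * v j) - f x) / s \<le> (u * (f ?a - f x)) / s"
    using s by (simp add: divide_right_mono algebra_simps)
  also have "(u * (f ?a - f x)) / s = (f ?a - f x) / \<tau>"
    using s unfolding u_def by simp
  finally show ?thesis
    unfolding diff_quot_def .
qed

lemma dir_deriv_le: "v \<in> Rd d \<Longrightarrow> 0 < \<tau> \<Longrightarrow> dir_deriv f x v \<le> diff_quot f x v \<tau>"
  unfolding dir_deriv_def
  by (rule cInf_lower, simp, rule bdd_belowI[of _ "f x - f (\<lambda>j. x j - v j)"])
     (auto intro: diff_quot_lower_bound)

lemma dir_deriv_greatest:
  "(\<And>\<tau>. 0 < \<tau> \<Longrightarrow> c \<le> diff_quot f x v \<tau>) \<Longrightarrow> c \<le> dir_deriv f x v"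
  unfolding dir_deriv_def by (rule cInf_greatest) auto

lemma dir_deriv_scale:
  assumes v_Rd: "v \<in> Rd d" and a: "0 < a"
  shows "dir_deriv f x (\<lambda>j. a * v j) = a * dir_deriv f x v"
proof -
  have av_Rd: "(\<lambda>j. a * v j) \<in> Rd d"
    using v_Rd unfolding Rd_def by auto
  have quot: "diff_quot f x (\<lambda>j. a * v j) \<tau> = a * diff_quot f x v (a * \<tau>)" if "0 < \<tau>" for \<tau>
    using a that unfolding diff_quot_def by (simp add: ac_simps)
  have "dir_deriv f x (\<lambda>j. a * v j) / a \<le> dir_deriv f x v"
  proof (rule dir_deriv_greatest)
    fix s :: real
    assume "0 < s"
    then have "dir_deriv f x (\<lambda>j. a * v j) \<le> a * diff_quot f x v s"
      using dir_deriv_le[OF av_Rd, of "s / a"] quot[of "s / a"] a by simp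
    then show "dir_deriv f x (\<lambda>j. a * v j) / a \<le> diff_quot f x v s"
      using a by (simp add: divide_le_eq mult.commute)
  qed
  moreover have "a * dir_deriv f x v \<le> dir_deriv f x (\<lambda>j. a * v j)"
  proof (rule dir_deriv_greatest)
    fix s :: real
    assume "0 < s"
    then show "a * dir_deriv f x v \<le> diff_quot f x (\<lambda>j. a * v j) s"
      using a quot[of s] by (simp add: dir_deriv_le[OF v_Rd])
  qed
  ultimately show ?thesis
    using a by (simp add: divide_le_eq mult.commute)
qed

lemma diff_quot_add_le:
  assumes u_Rd: "u \<in> Rd d" and w_Rd: "w \<in> Rd d" and \<tau>: "0 < \<tau>"
  shows "diff_quot f x (\<lambda>j. u j + w j) \<tau> \<le> diff_quot f x u (2 * \<tau>) + diff_quot f x w (2 * \<tau>)"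
proof -
  let ?a = "\<lambda>j. x j + (2 * \<tau>) * u j" and ?b = "\<lambda>j. x j + (2 * \<tau>) * w j"
  have "(\<lambda>j. (1/2) * ?a j + (1 - 1/2) * ?b j) = (\<lambda>j. x j + \<tau> * (u j + w j))"
    by (rule ext) (simp add: algebra_simps)
  then have "f (\<lambda>j. x j + \<tau> * (u j + w j)) \<le> (1/2) * f ?a + (1 - 1/2) * f ?b"
    using cvx_funD[OF cvx Rd_add_scaled[OF x_Rd u_Rd, of "2 * \<tau>"]
        Rd_add_scaled[OF x_Rd w_Rd, of "2 * \<tau>"], of "1/2"] by simp
  then have "(f (\<lambda>j. x j + \<tau> * (u j + w j)) - f x) / \<tau> \<le> ((f ?a - f x) + (f ?b - f x)) / (2 * \<tau>)"
    using \<tau> by (simp add: divide_simps)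
  also have "\<dots> = (f ?a - f x) / (2 * \<tau>) + (f ?b - f x) / (2 * \<tau>)"
    by (rule add_divide_distrib)
  finally show ?thesis
    unfolding diff_quot_def .
qed

lemma dir_deriv_add_le:
  assumes u_Rd: "u \<in> Rd d" and w_Rd: "w \<in> Rd d"
  shows "dir_deriv f x (\<lambda>j. u j + w j) \<le> dir_deriv f x u + dir_deriv f x w"
proof -
  have uw_Rd: "(\<lambda>j. u j + w j) \<in> Rd d"
    using u_Rd w_Rd unfolding Rd_def by auto
  have key: "dir_deriv f x (\<lambda>j. u j + w j) \<le> diff_quot f x u s1 + diff_quot f x w s2"
    if "0 < s1" "0 < s2" for s1 s2
  proof -
    define \<tau> where "\<tau> = min s1 s2 / 2"
    have \<tau>: "0 < \<tau>"
      using that unfolding \<tau>_def by simp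
    have "dir_deriv f x (\<lambda>j. u j + w j) \<le> diff_quot f x (\<lambda>j. u j + w j) \<tau>"
      by (rule dir_deriv_le[OF uw_Rd \<tau>])
    also have "\<dots> \<le> diff_quot f x u (2 * \<tau>) + diff_quot f x w (2 * \<tau>)"
      by (rule diff_quot_add_le[OF u_Rd w_Rd \<tau>])
    also have "\<dots> \<le> diff_quot f x u s1 + diff_quot f x w s2"
      using \<tau> that unfolding \<tau>_def by (intro add_mono diff_quot_mono u_Rd w_Rd) auto
    finally show ?thesis .
  qed
  have "dir_deriv f x (\<lambda>j. u j + w j) - dir_deriv f x w \<le> dir_deriv f x u"
  proof (rule dir_deriv_greatest)
    fix s1 :: real
    assume "0 < s1"
    then have "dir_deriv f x (\<lambda>j. u j + w j) - diff_quot f x u s1 \<le> dir_deriv f x w"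
      using key by (intro dir_deriv_greatest) force
    then show "dir_deriv f x (\<lambda>j. u j + w j) - dir_deriv f x w \<le> diff_quot f x u s1"
      by simp
  qed
  then show ?thesis
    by simp
qed

end

lemma real_between:
  fixes l u :: "'a \<Rightarrow> real"
  assumes "U \<noteq> {}" and "\<And>a b. a \<in> U \<Longrightarrow> b \<in> U \<Longrightarrow> l a \<le> u b"
  shows "\<exists>c. (\<forall>a\<in>U. l a \<le> c) \<and> (\<forall>b\<in>U. c \<le> u b)"
proof -
  obtain b0 where b0: "b0 \<in> U"
    using assms(1) by blast
  have bdd: "bdd_above (l ` U)"
    by (rule bdd_aboveI2[of _ _ "u b0"]) (use assms(2) b0 in blast)
  have "l a \<le> Sup (l ` U)" if "a \<in> U" for a
    using bdd that by (simp add: cSup_upper)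
  moreover have "Sup (l ` U) \<le> u b" if "b \<in> U" for b
    using assms(1) assms(2)[OF _ that] by (intro cSup_least) blast+
  ultimately show ?thesis
    by blast
qed

lemma sublinear_sandwich:
  fixes p :: "(nat \<Rightarrow> real) \<Rightarrow> real"
  assumes sub: "\<And>u w. u \<in> Rd d \<Longrightarrow> w \<in> Rd d \<Longrightarrow> p (\<lambda>j. u j + w j) \<le> p u + p w"
    and dom: "\<And>v. v \<in> U \<Longrightarrow> ip d g v \<le> p v"
    and U: "U \<subseteq> Rd d" "(\<lambda>j. 0) \<in> U" "\<And>u w. u \<in> U \<Longrightarrow> w \<in> U \<Longrightarrow> (\<lambda>j. u j + w j) \<in> U"
    and e: "e \<in> Rd d"
  shows "\<exists>c. (\<forall>u\<in>U. ip d g u - p (\<lambda>j. u j - e j) \<le> c) \<and> (\<forall>w\<in>U. c \<le> p (\<lambda>j. w j + e j) - ip d g w)"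
proof (rule real_between)
  fix u w
  assume "u \<in> U" "w \<in> U"
  have "ip d g u + ip d g w = ip d g (\<lambda>j. u j + w j)"
    by (simp add: ip_add_right)
  also have "\<dots> \<le> p (\<lambda>j. (u j - e j) + (w j + e j))"
    using dom U(3)[OF \<open>u \<in> U\<close> \<open>w \<in> U\<close>] by simp
  also have "\<dots> \<le> p (\<lambda>j. u j - e j) + p (\<lambda>j. w j + e j)"
    using \<open>u \<in> U\<close> \<open>w \<in> U\<close> U(1) e by (intro sub) (auto simp: Rd_def)
  finally show "ip d g u - p (\<lambda>j. u j - e j) \<le> p (\<lambda>j. w j + e j) - ip d g w"
    by simp
qed (use U(2) in blast)

lemma sublinear_shift_bound:
  fixes p :: "(nat \<Rightarrow> real) \<Rightarrow> real"
  assumes hom: "\<And>v a. v \<in> Rd d \<Longrightarrow> 0 < a \<Longrightarrow> p (\<lambda>j. a * v j) = a * p v"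
    and "u \<in> Rd d" and "e \<in> Rd d" and b: "0 < b"
    and c: "c \<le> p (\<lambda>j. (1 / b) * u j + e j) - ip d g (\<lambda>j. (1 / b) * u j)"
  shows "ip d g u + b * c \<le> p (\<lambda>j. u j + b * e j)"
proof -
  have "(\<lambda>j. u j + b * e j) = (\<lambda>j. b * ((1 / b) * u j + e j))"
    using b by (simp add: fun_eq_iff distrib_left)
  moreover have "(\<lambda>j. (1 / b) * u j + e j) \<in> Rd d"
    using assms(2,3) unfolding Rd_def by simp
  ultimately have "p (\<lambda>j. u j + b * e j) = b * p (\<lambda>j. (1 / b) * u j + e j)"
    using hom b by simp
  moreover have "b * ip d g (\<lambda>j. (1 / b) * u j) = ip d g u"
    unfolding ip_scale_right using b by simp
  ultimately show ?thesis
    using mult_left_mono[OF c, of b] b by (simp add: right_diff_distrib)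
qed

lemma sublinear_dominated_extend:
  fixes p :: "(nat \<Rightarrow> real) \<Rightarrow> real"
  assumes hom: "\<And>v a. v \<in> Rd d \<Longrightarrow> 0 < a \<Longrightarrow> p (\<lambda>j. a * v j) = a * p v"
    and sub: "\<And>u w. u \<in> Rd d \<Longrightarrow> w \<in> Rd d \<Longrightarrow> p (\<lambda>j. u j + w j) \<le> p u + p w"
    and k: "k < d" and g: "\<forall>j\<ge>k. g j = 0"
    and dom: "\<forall>v\<in>Rd d. (\<forall>j\<ge>k. v j = 0) \<longrightarrow> ip d g v \<le> p v"
  shows "\<exists>c. \<forall>v\<in>Rd d. (\<forall>j\<ge>Suc k. v j = 0) \<longrightarrow> ip d (g(k := c)) v \<le> p v"
proof -
  define U where "U = {u \<in> Rd d. \<forall>j\<ge>k. u j = 0}"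
  define e :: "nat \<Rightarrow> real" where "e = (\<lambda>j. if j = k then 1 else 0)"
  have e_Rd: "e \<in> Rd d" and neg_e_Rd: "(\<lambda>j. - e j) \<in> Rd d"
    using k unfolding e_def Rd_def by auto
  have scale_U: "(\<lambda>j. a * u j) \<in> U" if "u \<in> U" for a u
    using that unfolding U_def Rd_def by auto
  have "\<exists>c. (\<forall>u\<in>U. ip d g u - p (\<lambda>j. u j - e j) \<le> c) \<and> (\<forall>w\<in>U. c \<le> p (\<lambda>j. w j + e j) - ip d g w)"
  proof (rule sublinear_sandwich[OF sub])
    show "\<And>v. v \<in> U \<Longrightarrow> ip d g v \<le> p v"
      using dom unfolding U_def by blast
  qed (use e_Rd in \<open>auto simp: U_def Rd_def\<close>)
  then obtain c where c_lower: "\<And>u. u \<in> U \<Longrightarrow> ip d g u - p (\<lambda>j. u j - e j) \<le> c"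
    and c_upper: "\<And>w. w \<in> U \<Longrightarrow> c \<le> p (\<lambda>j. w j + e j) - ip d g w"
    by blast
  show ?thesis
  proof (intro exI ballI impI)
    fix v
    assume v: "v \<in> Rd d" "\<forall>j\<ge>Suc k. v j = 0"
    define a where "a = v k"
    define u where "u = v(k := 0)"
    have u: "u \<in> U" "u \<in> Rd d"
      using v unfolding U_def u_def Rd_def by (auto simp: le_Suc_eq)
    have v_eq: "v = (\<lambda>j. u j + a * e j)"
      unfolding u_def a_def e_def by auto
    have "ip d (g(k := c)) v = (\<Sum>j<d. g j * u j + (if j = k then c * a else 0))"
      unfolding ip_def by (rule sum.cong) (auto simp: u_def a_def g)
    then have ip_v: "ip d (g(k := c)) v = ip d g u + a * c"
      using k by (simp add: sum.distrib ip_def mult.commute)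
    consider "0 < a" | "a < 0" | "a = 0"
      by linarith
    then have "ip d g u + a * c \<le> p (\<lambda>j. u j + a * e j)"
    proof cases
      case 1
      show ?thesis
        by (rule sublinear_shift_bound[OF hom u(2) e_Rd 1 c_upper[OF scale_U[OF u(1)]]])
    next
      case 2
      then have "- c \<le> p (\<lambda>j. (1 / - a) * u j + - e j) - ip d g (\<lambda>j. (1 / - a) * u j)"
        using c_lower[OF scale_U[OF u(1)], of "1 / - a"] by simp
      from sublinear_shift_bound[OF hom u(2) neg_e_Rd _ this] 2
      have "ip d g u + (- a) * (- c) \<le> p (\<lambda>j. u j + (- a) * (- e j))"
        by simp
      then show ?thesis
        by simp
    qed (use dom u in \<open>simp add: U_def\<close>)
    then show "ip d (g(k := c)) v \<le> p v"
      using ip_v v_eq by simp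
  qed
qed

text \<open>Finite-dimensional Hahn--Banach: extend coordinate by coordinate.\<close>
lemma sublinear_dominates_linear:
  fixes p :: "(nat \<Rightarrow> real) \<Rightarrow> real"
  assumes hom: "\<And>v a. v \<in> Rd d \<Longrightarrow> 0 < a \<Longrightarrow> p (\<lambda>j. a * v j) = a * p v"
    and sub: "\<And>u w. u \<in> Rd d \<Longrightarrow> w \<in> Rd d \<Longrightarrow> p (\<lambda>j. u j + w j) \<le> p u + p w"
  shows "\<exists>g\<in>Rd d. \<forall>v\<in>Rd d. ip d g v \<le> p v"
proof -
  have p0: "p (\<lambda>j. 0) = 0"
    using hom[of "\<lambda>j. 0" 2] by (simp add: Rd_def)
  have "\<exists>g. (\<forall>j\<ge>k. g j = 0) \<and> (\<forall>v\<in>Rd d. (\<forall>j\<ge>k. v j = 0) \<longrightarrow> ip d g v \<le> p v)"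
    if "k \<le> d" for k
    using that
  proof (induction k)
    case 0
    then show ?case
      using p0 by (intro exI[of _ "\<lambda>j. 0"]) (auto simp: ip_def)
  next
    case (Suc k)
    then obtain g where g: "\<forall>j\<ge>k. g j = 0"
      and dom: "\<forall>v\<in>Rd d. (\<forall>j\<ge>k. v j = 0) \<longrightarrow> ip d g v \<le> p v"
      by auto
    have "k < d"
      using Suc.prems by simp
    then obtain c where "\<forall>v\<in>Rd d. (\<forall>j\<ge>Suc k. v j = 0) \<longrightarrow> ip d (g(k := c)) v \<le> p v"
      using sublinear_dominated_extend[OF hom sub _ g dom] by presburger
    moreover have "\<forall>j\<ge>Suc k. (g(k := c)) j = 0"
      using g by simp
    ultimately show ?case
      by blast
  qed
  from this[of d] show ?thesis
    unfolding Rd_def by auto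
qed

lemma subgrad_exists:
  assumes "cvx_fun d f" and "x \<in> Rd d"
  shows "\<exists>g. subgrad d f x g"
proof -
  obtain g where g: "g \<in> Rd d" and dom: "\<And>v. v \<in> Rd d \<Longrightarrow> ip d g v \<le> dir_deriv f x v"
    using sublinear_dominates_linear[of d "dir_deriv f x"]
      dir_deriv_scale[OF assms] dir_deriv_add_le[OF assms] by blast
  have "f x + ip d g (vdiff y x) \<le> f y" if "y \<in> Rd d" for y
  proof -
    have yx: "vdiff y x \<in> Rd d"
      by (rule vdiff_in_Rd[OF that assms(2)])
    have "ip d g (vdiff y x) \<le> dir_deriv f x (vdiff y x)"
      by (rule dom[OF yx])
    also have "\<dots> \<le> diff_quot f x (vdiff y x) 1"
      by (rule dir_deriv_le[OF assms yx]) simp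
    finally have "ip d g (vdiff y x) \<le> diff_quot f x (vdiff y x) 1" .
    then show ?thesis
      unfolding diff_quot_def vdiff_def by simp
  qed
  then show ?thesis
    using g unfolding subgrad_def by blast
qed

lemma lipschitz_of_bounded_subgrad:
  assumes "cvx_fun d f" and "x \<in> Rd d" and "y \<in> Rd d"
    and L: "\<forall>z\<in>Rd d. \<forall>v. subgrad d f z v \<longrightarrow> enorm d v \<le> L"
  shows "f y - f x \<le> L * enorm d (vdiff y x)"
proof -
  obtain h where h: "subgrad d f y h"
    using subgrad_exists[OF assms(1,3)] by blast
  then have "f y - f x \<le> ip d h (vdiff y x)"
    using assms(2) ip_vdiff_swap[of d h x y] unfolding subgrad_def by force
  also have "\<dots> \<le> enorm d h * enorm d (vdiff y x)"
    by (rule ip_le_enorm_mult)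
  also have "\<dots> \<le> L * enorm d (vdiff y x)"
    using L h assms(3) by (intro mult_right_mono) (auto simp: enorm_nonneg)
  finally show ?thesis .
qed

lemma cvx_fun_weighted_mean_le:
  fixes w :: "nat \<Rightarrow> real"
  assumes "cvx_fun d f" and "\<And>k. k \<in> K \<Longrightarrow> 0 \<le> w k" and "\<And>k. k \<in> K \<Longrightarrow> y k \<in> Rd d"
    and "z \<in> Rd d" and mean: "\<And>j. (\<Sum>k\<in>K. w k) * z j = (\<Sum>k\<in>K. w k * y k j)"
  shows "(\<Sum>k\<in>K. w k) * f z \<le> (\<Sum>k\<in>K. w k * f (y k))"
proof -
  obtain h where h: "subgrad d f z h"
    using subgrad_exists[OF assms(1,4)] by blast
  have "(\<Sum>k\<in>K. w k * ip d h (vdiff (y k) z)) = (\<Sum>k\<in>K. \<Sum>j<d. h j * (w k * (y k j - z j)))"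
    unfolding ip_def vdiff_def by (simp add: sum_distrib_left mult_ac)
  also have "\<dots> = (\<Sum>j<d. h j * (\<Sum>k\<in>K. w k * (y k j - z j)))"
    by (subst sum.swap) (simp add: sum_distrib_left)
  also have "\<dots> = (\<Sum>j<d. h j * ((\<Sum>k\<in>K. w k * y k j) - (\<Sum>k\<in>K. w k) * z j))"
    by (simp add: right_diff_distrib sum_subtractf sum_distrib_right)
  finally have "(\<Sum>k\<in>K. w k * ip d h (vdiff (y k) z)) = 0"
    by (simp add: mean)
  then have "(\<Sum>k\<in>K. w k) * f z = (\<Sum>k\<in>K. w k * (f z + ip d h (vdiff (y k) z)))"
    by (simp add: distrib_left sum.distrib sum_distrib_right)
  also have "\<dots> \<le> (\<Sum>k\<in>K. w k * f (y k))"
    using h assms(2,3) unfolding subgrad_def by (intro sum_mono mult_left_mono) auto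
  finally show ?thesis .
qed

section \<open>Convex sets and projection\<close>

lemma cvx_setD:
  "cvx_set d S \<Longrightarrow> x \<in> S \<Longrightarrow> y \<in> S \<Longrightarrow> 0 \<le> u \<Longrightarrow> u \<le> 1 \<Longrightarrow>
    (\<lambda>j. u * x j + (1 - u) * y j) \<in> S"
  unfolding cvx_set_def by blast

lemma cvx_set_sum:
  fixes w :: "nat \<Rightarrow> real" and q :: "nat \<Rightarrow> nat \<Rightarrow> real"
  assumes "cvx_set d S" and "\<forall>m<N. q m \<in> S" and "\<forall>m<N. 0 \<le> w m" and "(\<Sum>m<N. w m) = 1"
  shows "(\<lambda>j. \<Sum>m<N. w m * q m j) \<in> S"
  using assms(2-)
proof (induction N arbitrary: w)
  case 0
  then show ?case
    by simp
next
  case (Suc N)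
  let ?a = "w N"
  have a: "0 \<le> ?a" "(\<Sum>m<N. w m) = 1 - ?a"
    using Suc.prems by simp_all
  show ?case
  proof (cases "?a = 1")
    case True
    then have "(\<Sum>m<N. w m) = 0"
      using a by simp
    then have "\<forall>m<N. w m = 0"
      using Suc.prems(2) by (subst (asm) sum_nonneg_eq_0_iff) auto
    then have "(\<lambda>j. \<Sum>m<Suc N. w m * q m j) = q N"
      using True by (auto simp: fun_eq_iff)
    then show ?thesis
      using Suc.prems by simp
  next
    case False
    have a1: "?a < 1"
      using False a Suc.prems(2) sum_nonneg[of "{..<N}" w] by fastforce
    define w' where "w' = (\<lambda>m. w m / (1 - ?a))"
    have "(\<lambda>j. \<Sum>m<N. w' m * q m j) \<in> S"
      using Suc.prems a a1 unfolding w'_def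
      by (intro Suc.IH) (auto simp: sum_divide_distrib[symmetric])
    from cvx_setD[OF assms(1) _ this a(1)]
    have "(\<lambda>j. ?a * q N j + (1 - ?a) * (\<Sum>m<N. w' m * q m j)) \<in> S"
      using Suc.prems a1 by simp
    moreover have "(\<lambda>j. ?a * q N j + (1 - ?a) * (\<Sum>m<N. w' m * q m j)) = (\<lambda>j. \<Sum>m<Suc N. w m * q m j)"
      using a1 unfolding w'_def by (auto simp: fun_eq_iff sum_distrib_left)
    ultimately show ?thesis
      by simp
  qed
qed

lemma nearest_point_obtuse:
  assumes "cvx_set d S" and "p \<in> S" and "z \<in> S"
    and nearest: "\<forall>q\<in>S. enorm d (vdiff y p) \<le> enorm d (vdiff y q)"
  shows "ip d (vdiff y p) (vdiff z p) \<le> 0"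
proof (rule ccontr)
  let ?a = "ip d (vdiff y p) (vdiff z p)" and ?b = "sqnorm d (vdiff z p)"
  assume "\<not> ?a \<le> 0"
  then have a: "0 < ?a"
    by simp
  have b: "0 \<le> ?b"
    by (rule sqnorm_nonneg)
  define u where "u = min 1 (?a / (?b + 1))"
  have u: "0 < u" "u \<le> 1"
    using a b unfolding u_def by auto
  have "u * ?b \<le> (?a / (?b + 1)) * ?b"
    using b unfolding u_def by (intro mult_right_mono) auto
  also have "\<dots> < ?a"
    using a b by (simp add: field_simps)
  finally have "u\<^sup>2 * ?b < u * ?a"
    using u by (simp add: power2_eq_square mult.assoc)
  let ?q = "\<lambda>j. u * z j + (1 - u) * p j"
  have "vdiff y ?q = (\<lambda>j. vdiff y p j - u * vdiff z p j)"
    unfolding vdiff_def by (auto simp: algebra_simps)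
  then have "sqnorm d (vdiff y ?q) = sqnorm d (vdiff y p) - 2 * u * ?a + u\<^sup>2 * ?b"
    by (simp add: sqnorm_diff sqnorm_scale ip_scale_right)
  also have "\<dots> < sqnorm d (vdiff y p)"
  proof -
    have "0 < u * ?a" "2 * u * ?a = u * ?a + u * ?a"
      using u a by simp_all
    then show ?thesis
      using \<open>u\<^sup>2 * ?b < u * ?a\<close> by linarith
  qed
  finally have "sqnorm d (vdiff y ?q) < sqnorm d (vdiff y p)" .
  moreover have "?q \<in> S"
    using cvx_setD[OF assms(1,3,2)] u by simp
  then have "sqnorm d (vdiff y p) \<le> sqnorm d (vdiff y ?q)"
    using nearest by (simp add: enorm_le_iff_sqnorm_le[symmetric])
  ultimately show False
    by simp
qed

lemma nearest_point_closer:
  assumes "cvx_set d S" and "p \<in> S" and "z \<in> S"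
    and "\<forall>q\<in>S. enorm d (vdiff y p) \<le> enorm d (vdiff y q)"
  shows "enorm d (vdiff p z) \<le> enorm d (vdiff y z)"
proof -
  have "vdiff y z = (\<lambda>j. vdiff y p j - vdiff z p j)"
    unfolding vdiff_def by auto
  then have "sqnorm d (vdiff y z) = sqnorm d (vdiff y p) - 2 * ip d (vdiff y p) (vdiff z p) + sqnorm d (vdiff z p)"
    by (simp add: sqnorm_diff)
  also have "\<dots> \<ge> sqnorm d (vdiff z p)"
    using nearest_point_obtuse[OF assms] sqnorm_nonneg[of d "vdiff y p"] by linarith
  finally show ?thesis
    by (simp add: enorm_le_iff_sqnorm_le enorm_vdiff_commute[of d p z])
qed

lemma Rd_complete:
  fixes p :: "nat \<Rightarrow> nat \<Rightarrow> real"
  assumes cauchy: "\<And>e. 0 < e \<Longrightarrow> \<exists>M. \<forall>m\<ge>M. \<forall>l\<ge>M. enorm d (vdiff (p m) (p l)) < e"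
  shows "\<exists>z\<in>Rd d. (\<lambda>k. enorm d (vdiff (p k) z)) \<longlonglongrightarrow> 0"
proof -
  have "Cauchy (\<lambda>k. p k j)" if "j < d" for j
  proof (rule metric_CauchyI)
    fix e :: real
    assume "0 < e"
    then obtain M where M: "\<forall>m\<ge>M. \<forall>l\<ge>M. enorm d (vdiff (p m) (p l)) < e"
      using cauchy by blast
    have "dist (p m j) (p l j) < e" if "M \<le> m" "M \<le> l" for m l
    proof -
      have "\<bar>p m j - p l j\<bar> \<le> enorm d (vdiff (p m) (p l))"
        using power2_le_sqnorm[OF \<open>j < d\<close>, of "vdiff (p m) (p l)"]
        by (simp add: enorm_eq_sqrt_sqnorm vdiff_def real_le_rsqrt)
      moreover have "enorm d (vdiff (p m) (p l)) < e"
        using M that by blast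
      ultimately show ?thesis
        by (simp add: dist_real_def)
    qed
    then show "\<exists>M. \<forall>m\<ge>M. \<forall>l\<ge>M. dist (p m j) (p l j) < e"
      by blast
  qed
  then have lim: "(\<lambda>k. p k j) \<longlonglongrightarrow> lim (\<lambda>k. p k j)" if "j < d" for j
    using that by (simp add: Cauchy_convergent_iff convergent_LIMSEQ_iff)
  define z where "z = (\<lambda>j. if j < d then lim (\<lambda>k. p k j) else 0)"
  have "(\<lambda>k. L2_set (\<lambda>j. p k j - z j) {..<d}) \<longlonglongrightarrow> L2_set (\<lambda>j. z j - z j) {..<d}"
    unfolding L2_set_def using lim
    by (intro tendsto_real_sqrt tendsto_sum tendsto_power tendsto_diff) (auto simp: z_def)
  then have "(\<lambda>k. enorm d (vdiff (p k) z)) \<longlonglongrightarrow> 0"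
    by (simp add: enorm_def vdiff_def L2_set_0')
  moreover have "z \<in> Rd d"
    unfolding Rd_def z_def by auto
  ultimately show ?thesis
    by blast
qed

lemma sqnorm_parallelogram:
  "sqnorm d (vdiff a b) =
    2 * sqnorm d (vdiff y a) + 2 * sqnorm d (vdiff y b)
    - 4 * sqnorm d (vdiff y (\<lambda>j. (1/2) * a j + (1 - 1/2) * b j))"
proof -
  have "sqnorm d (vdiff a b) = (\<Sum>j<d. 2 * (y j - a j)\<^sup>2 + 2 * (y j - b j)\<^sup>2
      - 4 * (y j - ((1/2) * a j + (1 - 1/2) * b j))\<^sup>2)"
    unfolding sqnorm_def vdiff_def by (rule sum.cong) (auto simp: power2_eq_square algebra_simps)
  then show ?thesis
    unfolding sqnorm_def vdiff_def by (simp add: sum.distrib sum_subtractf sum_distrib_left)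
qed

context
  fixes d S y \<delta> and p :: "nat \<Rightarrow> nat \<Rightarrow> real"
  assumes cvx: "cvx_set d S" and p: "\<And>k. p k \<in> S"
    and lower: "\<And>q. q \<in> S \<Longrightarrow> \<delta> \<le> enorm d (vdiff y q)" and \<delta>_nonneg: "0 \<le> \<delta>"
    and near: "\<And>k. enorm d (vdiff y (p k)) < sqrt (\<delta>\<^sup>2 + 1 / (real k + 1))"
begin

text \<open>By convexity the midpoint of two nearly minimising points is no closer than \<open>\<delta>\<close>, so by
  the parallelogram law the points themselves are close.\<close>
lemma minimizing_sequence_close:
  "sqnorm d (vdiff (p k) (p l)) \<le> 2 * (1 / (real k + 1) + 1 / (real l + 1))"
proof -
  have "\<delta> \<le> enorm d (vdiff y (\<lambda>j. (1/2) * p k j + (1 - 1/2) * p l j))"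
    by (intro lower cvx_setD[OF cvx p p]) auto
  then have "\<delta>\<^sup>2 \<le> sqnorm d (vdiff y (\<lambda>j. (1/2) * p k j + (1 - 1/2) * p l j))"
    using \<delta>_nonneg by (metis enorm_power2 power_mono)
  moreover have "sqnorm d (vdiff y (p i)) \<le> \<delta>\<^sup>2 + 1 / (real i + 1)" for i
    using near[of i] by (simp add: enorm_eq_sqrt_sqnorm real_sqrt_less_iff)
  ultimately show ?thesis
    using sqnorm_parallelogram[of d "p k" "p l" y] by (smt (verit))
qed

lemma minimizing_sequence_Cauchy:
  assumes e: "0 < e"
  shows "\<exists>M. \<forall>m\<ge>M. \<forall>l\<ge>M. enorm d (vdiff (p m) (p l)) < e"
proof -
  obtain M :: nat where M: "4 / e\<^sup>2 < real M"
    using reals_Archimedean2 by blast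
  have "enorm d (vdiff (p m) (p l)) < e" if "M \<le> m" "M \<le> l" for m l
  proof -
    have mono: "1 / (real i + 1) \<le> 1 / (real M + 1)" if "M \<le> i" for i
      using that by (simp add: frac_le)
    have "sqnorm d (vdiff (p m) (p l)) \<le> 2 * (1 / (real m + 1) + 1 / (real l + 1))"
      by (rule minimizing_sequence_close)
    also have "\<dots> \<le> 2 * (1 / (real M + 1) + 1 / (real M + 1))"
      by (intro mult_left_mono add_mono mono that) simp
    also have "\<dots> = 4 / (real M + 1)"
      by simp
    also have "\<dots> < e\<^sup>2"
    proof -
      have "4 < real M * e\<^sup>2"
        using M e by (simp add: field_simps)
      also have "\<dots> \<le> e\<^sup>2 * (real M + 1)"
        by (simp add: algebra_simps)
      finally show ?thesis
        by (simp add: pos_divide_less_eq)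
    qed
    finally show ?thesis
      using real_less_lsqrt[of e] e by (simp add: enorm_eq_sqrt_sqnorm sqnorm_nonneg)
  qed
  then show ?thesis
    by blast
qed

end

lemma nearest_point_exists:
  assumes cvx: "cvx_set d S" and closed: "closed_set d S" and "S \<noteq> {}"
  shows "\<exists>p\<in>S. \<forall>q\<in>S. enorm d (vdiff y p) \<le> enorm d (vdiff y q)"
proof -
  define \<delta> where "\<delta> = Inf ((\<lambda>q. enorm d (vdiff y q)) ` S)"
  have \<delta>_le: "\<delta> \<le> enorm d (vdiff y q)" if "q \<in> S" for q
    unfolding \<delta>_def using that by (intro cInf_lower bdd_belowI2[of _ 0]) (auto simp: enorm_nonneg)
  have \<delta>_nonneg: "0 \<le> \<delta>"
    unfolding \<delta>_def using assms(3) by (intro cInf_greatest) (auto simp: enorm_nonneg)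
  have "\<exists>q\<in>S. enorm d (vdiff y q) < sqrt (\<delta>\<^sup>2 + 1 / (real k + 1))" for k
  proof -
    have "Inf ((\<lambda>q. enorm d (vdiff y q)) ` S) < sqrt (\<delta>\<^sup>2 + 1 / (real k + 1))"
      unfolding \<delta>_def[symmetric] by (intro real_less_rsqrt) simp
    then show ?thesis
      using assms(3) by (subst (asm) cInf_less_iff) (auto intro: bdd_belowI2[of _ 0] simp: enorm_nonneg)
  qed
  then obtain p where p: "\<And>k. p k \<in> S"
    and p_near: "\<And>k. enorm d (vdiff y (p k)) < sqrt (\<delta>\<^sup>2 + 1 / (real k + 1))"
    by metis
  note minimizing_sequence_Cauchy[OF cvx p \<delta>_le \<delta>_nonneg p_near]
  then obtain z where z: "z \<in> Rd d" and p_lim: "(\<lambda>k. enorm d (vdiff (p k) z)) \<longlonglongrightarrow> 0"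
    using Rd_complete by blast
  have "z \<in> S"
    using closed p z p_lim unfolding closed_set_def by blast
  moreover have "enorm d (vdiff y z) \<le> \<delta>"
  proof (rule tendsto_le[OF sequentially_bot])
    have "(\<lambda>k. 1 / (real k + 1)) \<longlonglongrightarrow> 0"
      using LIMSEQ_inverse_real_of_nat by (simp add: divide_inverse add.commute)
    then have "(\<lambda>k. sqrt (\<delta>\<^sup>2 + 1 / (real k + 1)) + enorm d (vdiff (p k) z)) \<longlonglongrightarrow> sqrt (\<delta>\<^sup>2 + 0) + 0"
      by (intro tendsto_intros p_lim)
    then show "(\<lambda>k. sqrt (\<delta>\<^sup>2 + 1 / (real k + 1)) + enorm d (vdiff (p k) z)) \<longlonglongrightarrow> \<delta>"
      using \<delta>_nonneg by simp
    show "\<forall>\<^sub>F k in sequentially. enorm d (vdiff y z) \<le> sqrt (\<delta>\<^sup>2 + 1 / (real k + 1)) + enorm d (vdiff (p k) z)"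
      using enorm_vdiff_triangle[of d y z] p_near by (intro always_eventually allI) (smt (verit))
  qed simp
  ultimately show ?thesis
    using \<delta>_le order_trans by blast
qed

lemma proj_nearest:
  assumes "cvx_set d S" and "closed_set d S" and "S \<noteq> {}"
  shows "proj d S y \<in> S \<and> (\<forall>q\<in>S. enorm d (vdiff y (proj d S y)) \<le> enorm d (vdiff y q))"
proof -
  have "\<exists>p. p \<in> S \<and> (\<forall>q\<in>S. enorm d (vdiff y p) \<le> enorm d (vdiff y q))"
    using nearest_point_exists[OF assms] by blast
  from someI_ex[OF this] show ?thesis
    unfolding proj_def .
qed

lemma proj_in:
  assumes "cvx_set d S" and "closed_set d S" and "S \<noteq> {}"
  shows "proj d S y \<in> S"
  by (fact conjunct1[OF proj_nearest[OF assms]])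

lemma proj_closer:
  assumes "cvx_set d S" and "closed_set d S" and "z \<in> S"
  shows "enorm d (vdiff (proj d S y) z) \<le> enorm d (vdiff y z)"
proof -
  have "S \<noteq> {}"
    using assms(3) by blast
  then have "proj d S y \<in> S \<and> (\<forall>q\<in>S. enorm d (vdiff y (proj d S y)) \<le> enorm d (vdiff y q))"
    by (rule proj_nearest[OF assms(1,2)])
  then show ?thesis
    using nearest_point_closer[OF assms(1) _ assms(3)] by (elim conjE)
qed

section \<open>Contraction by the mixing matrix\<close>

lemma orthonormal_rows_imp_cols:
  fixes u :: "nat \<Rightarrow> nat \<Rightarrow> real"
  assumes orth: "\<forall>k<n. \<forall>l<n. (\<Sum>m<n. u k m * u l m) = (if k = l then 1 else 0)"
    and "i < n" and "j < n"
  shows "(\<Sum>k<n. u k i * u k j) = (if i = j then 1 else 0)"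
proof -
  define U :: "real mat" where "U = mat n n (\<lambda>(k, m). u k m)"
  have "U * transpose_mat U = 1\<^sub>m n"
  proof (rule eq_matI)
    fix i j
    assume "i < dim_row (1\<^sub>m n)" "j < dim_col (1\<^sub>m n)"
    then show "(U * transpose_mat U) $$ (i, j) = 1\<^sub>m n $$ (i, j)"
      using orth unfolding U_def
      by (simp add: scalar_prod_def sum.atLeast0_lessThan_Suc lessThan_atLeast0[symmetric])
  qed (auto simp: U_def)
  moreover have "U \<in> carrier_mat n n" "transpose_mat U \<in> carrier_mat n n"
    unfolding U_def by auto
  ultimately have "transpose_mat U * U = 1\<^sub>m n"
    using mat_mult_left_right_inverse by blast
  then have "(transpose_mat U * U) $$ (i, j) = 1\<^sub>m n $$ (i, j)"
    by simp
  then show ?thesis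
    using assms(2,3) unfolding U_def by (simp add: scalar_prod_def lessThan_atLeast0)
qed

context
  fixes n :: nat and u :: "nat \<Rightarrow> nat \<Rightarrow> real"
  assumes orth: "\<forall>k<n. \<forall>l<n. (\<Sum>m<n. u k m * u l m) = (if k = l then 1 else 0)"
begin

lemma orthonormal_expansion:
  assumes "i < n"
  shows "y i = (\<Sum>k<n. (\<Sum>l<n. u k l * y l) * u k i)"
proof -
  have "(\<Sum>k<n. (\<Sum>l<n. u k l * y l) * u k i) = (\<Sum>l<n. y l * (\<Sum>k<n. u k l * u k i))"
    by (simp add: sum_distrib_left sum_distrib_right mult_ac) (rule sum.swap)
  also have "\<dots> = (\<Sum>l<n. y l * (if l = i then 1 else 0))"
    using assms by (intro sum.cong) (auto simp: orthonormal_rows_imp_cols[OF orth])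
  also have "\<dots> = y i"
    using assms by (simp add: if_distrib cong: if_cong)
  finally show ?thesis
    by simp
qed

lemma orthonormal_parseval: "(\<Sum>i<n. (y i)\<^sup>2) = (\<Sum>k<n. (\<Sum>l<n. u k l * y l)\<^sup>2)"
proof -
  have "(\<Sum>k<n. (\<Sum>l<n. u k l * y l)\<^sup>2) = (\<Sum>i<n. y i * (\<Sum>k<n. (\<Sum>l<n. u k l * y l) * u k i))"
    by (simp add: power2_eq_square sum_distrib_left sum_distrib_right mult_ac) (rule sum.swap)
  also have "\<dots> = (\<Sum>i<n. (y i)\<^sup>2)"
    by (intro sum.cong) (auto simp: orthonormal_expansion[symmetric] power2_eq_square)
  finally show ?thesis
    by simp
qed

lemma orthonormal_quadratic_form:
  assumes eig: "\<And>k i. k < n \<Longrightarrow> i < n \<Longrightarrow> (\<Sum>j<n. M i j * u k j) = ev k * u k i"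
  shows "(\<Sum>a<n. z a * (\<Sum>b<n. M a b * z b)) = (\<Sum>k<n. ev k * (\<Sum>l<n. u k l * z l)\<^sup>2)"
proof -
  define c where "c k = (\<Sum>l<n. u k l * z l)" for k
  have "(\<Sum>b<n. M a b * z b) = (\<Sum>k<n. c k * ev k * u k a)" if "a < n" for a
  proof -
    have "(\<Sum>b<n. M a b * z b) = (\<Sum>b<n. M a b * (\<Sum>k<n. c k * u k b))"
      unfolding c_def by (intro sum.cong) (auto simp: orthonormal_expansion[symmetric])
    also have "\<dots> = (\<Sum>k<n. c k * (\<Sum>b<n. M a b * u k b))"
      by (simp add: sum_distrib_left mult_ac) (rule sum.swap)
    finally show ?thesis
      using eig that by (simp add: mult_ac)
  qed
  then have "(\<Sum>a<n. z a * (\<Sum>b<n. M a b * z b)) = (\<Sum>a<n. \<Sum>k<n. c k * ev k * (u k a * z a))"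
    by (simp add: sum_distrib_left mult_ac)
  also have "\<dots> = (\<Sum>k<n. ev k * (c k)\<^sup>2)"
    unfolding c_def by (subst sum.swap) (simp add: power2_eq_square sum_distrib_left mult_ac)
  finally show ?thesis
    unfolding c_def .
qed

end

lemma sum_power2_matrix_vector:
  fixes W :: "nat \<Rightarrow> nat \<Rightarrow> real" and z :: "nat \<Rightarrow> real"
  shows "(\<Sum>i<n. (\<Sum>m<n. W i m * z m)\<^sup>2) = (\<Sum>a<n. z a * (\<Sum>b<n. (\<Sum>m<n. W m a * W m b) * z b))"
proof -
  have "(\<Sum>i<n. (\<Sum>m<n. W i m * z m)\<^sup>2) = (\<Sum>i<n. \<Sum>a<n. \<Sum>b<n. W i a * W i b * z a * z b)"
    by (simp add: power2_eq_square sum_product mult_ac)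
  also have "\<dots> = (\<Sum>a<n. \<Sum>i<n. \<Sum>b<n. W i a * W i b * z a * z b)"
    by (rule sum.swap)
  also have "\<dots> = (\<Sum>a<n. \<Sum>b<n. \<Sum>i<n. W i a * W i b * z a * z b)"
    by (rule sum.cong[OF refl], rule sum.swap)
  also have "\<dots> = (\<Sum>a<n. z a * (\<Sum>b<n. (\<Sum>m<n. W m a * W m b) * z b))"
    by (simp add: sum_distrib_left sum_distrib_right mult_ac)
  finally show ?thesis .
qed

lemma second_singular_value_nonneg:
  assumes "second_singular_value n W \<sigma>" and "2 \<le> n"
  shows "0 \<le> \<sigma>"
proof -
  obtain s p where s: "\<forall>k<n. 0 \<le> s k" and "p < n" and \<sigma>: "\<sigma> = Max (s ` ({..<n} - {p}))"
    using assms(1) unfolding second_singular_value_def by blast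
  define k where "k = (if p = 0 then 1 else 0 :: nat)"
  have "k < n" "k \<noteq> p"
    using assms(2) unfolding k_def by auto
  then have "s k \<le> \<sigma>"
    unfolding \<sigma> by (intro Max_ge) auto
  then show ?thesis
    using s \<open>k < n\<close> by force
qed

text \<open>A doubly stochastic \<open>W\<close> fixes the all-ones vector, so the all-ones vector is a singular
  vector for the singular value 1; when all other singular values are below 1 it spans the top
  singular direction, which is therefore orthogonal to every mean-zero vector.\<close>
lemma doubly_stochastic_top_singular_vector:
  fixes u :: "nat \<Rightarrow> nat \<Rightarrow> real"
  assumes "doubly_stochastic n W"
    and orth: "\<forall>k<n. \<forall>l<n. (\<Sum>m<n. u k m * u l m) = (if k = l then 1 else 0)"
    and eig: "\<And>k i. k < n \<Longrightarrow> i < n \<Longrightarrow> (\<Sum>j<n. (\<Sum>m<n. W m i * W m j) * u k j) = (s k)\<^sup>2 * u k i"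
    and p: "p < n" and s_less_1: "\<And>k. k < n \<Longrightarrow> k \<noteq> p \<Longrightarrow> (s k)\<^sup>2 < 1"
    and mean_zero: "(\<Sum>m<n. z m) = 0"
  shows "(\<Sum>l<n. u p l * z l) = 0"
proof -
  define M where "M i j = (\<Sum>m<n. W m i * W m j)" for i j
  define c where "c y k = (\<Sum>l<n. u k l * y l)" for y k
  have M_ones: "(\<Sum>j<n. M i j) = 1" if "i < n" for i
  proof -
    have "(\<Sum>j<n. M i j) = (\<Sum>m<n. W m i * (\<Sum>j<n. W m j))"
      unfolding M_def by (subst sum.swap) (simp add: sum_distrib_left)
    then show ?thesis
      using assms(1) that unfolding doubly_stochastic_def by simp
  qed
  have ones_coeff: "c (\<lambda>i. 1) k = 0" if "k < n" "k \<noteq> p" for k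
  proof -
    have "c (\<lambda>i. 1) k = (\<Sum>i<n. u k i * (\<Sum>j<n. M i j))"
      unfolding c_def using M_ones by simp
    also have "\<dots> = (\<Sum>j<n. \<Sum>i<n. M j i * u k i)"
      unfolding M_def by (subst sum.swap) (simp add: sum_distrib_left mult_ac)
    also have "\<dots> = (s k)\<^sup>2 * c (\<lambda>i. 1) k"
      unfolding c_def M_def using eig \<open>k < n\<close> by (simp add: sum_distrib_left)
    finally have "(1 - (s k)\<^sup>2) * c (\<lambda>i. 1) k = 0"
      by (simp add: algebra_simps)
    then show ?thesis
      using s_less_1[OF that] by simp
  qed
  have ones_p: "c (\<lambda>i. 1) p * u p i = 1" if "i < n" for i
  proof -
    have "(\<Sum>k<n. c (\<lambda>i. 1) k * u k i) = (\<Sum>k\<in>{p}. c (\<lambda>i. 1) k * u k i)"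
      by (rule sum.mono_neutral_right) (use p ones_coeff in auto)
    then show ?thesis
      using orthonormal_expansion[OF orth that, of "\<lambda>i. 1"] unfolding c_def by simp
  qed
  have "(\<Sum>i<n. z i) = (\<Sum>i<n. c (\<lambda>i. 1) p * u p i * z i)"
    by (intro sum.cong) (auto simp: ones_p)
  also have "\<dots> = c (\<lambda>i. 1) p * c z p"
    unfolding c_def by (simp add: sum_distrib_left mult_ac)
  finally show ?thesis
    using mean_zero ones_p[OF p] unfolding c_def by auto
qed

lemma second_singular_value_contraction:
  assumes ssv: "second_singular_value n W \<sigma>" and "doubly_stochastic n W" and "\<sigma> < 1"
    and mean_zero: "(\<Sum>m<n. z m) = 0"
  shows "(\<Sum>i<n. (\<Sum>m<n. W i m * z m)\<^sup>2) \<le> \<sigma>\<^sup>2 * (\<Sum>m<n. (z m)\<^sup>2)"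
proof -
  obtain u s p where orth: "\<forall>k<n. \<forall>l<n. (\<Sum>m<n. u k m * u l m) = (if k = l then 1 else 0)"
    and s: "\<forall>k<n. 0 \<le> s k \<and> (\<forall>i<n. (\<Sum>j<n. (\<Sum>m<n. W m i * W m j) * u k j) = (s k)\<^sup>2 * u k i)"
    and p: "p < n" and \<sigma>: "\<sigma> = Max (s ` ({..<n} - {p}))"
    using ssv unfolding second_singular_value_def by blast
  define c where "c k = (\<Sum>l<n. u k l * z l)" for k
  have s_le: "s k \<le> \<sigma>" if "k < n" "k \<noteq> p" for k
    unfolding \<sigma> using that by (intro Max_ge) auto
  have "(s k)\<^sup>2 < 1" if "k < n" "k \<noteq> p" for k
    using s_le[OF that] s \<open>\<sigma> < 1\<close> \<open>k < n\<close> by (simp add: power_less_one_iff abs_less_iff)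
  then have "c p = 0"
    unfolding c_def using s by (intro doubly_stochastic_top_singular_vector[OF assms(2) orth _ p _ mean_zero]) auto
  have "(\<Sum>i<n. (\<Sum>m<n. W i m * z m)\<^sup>2) = (\<Sum>a<n. z a * (\<Sum>b<n. (\<Sum>m<n. W m a * W m b) * z b))"
    by (rule sum_power2_matrix_vector)
  also have "\<dots> = (\<Sum>k<n. (s k)\<^sup>2 * (c k)\<^sup>2)"
    unfolding c_def using s by (intro orthonormal_quadratic_form[OF orth]) auto
  also have "\<dots> \<le> (\<Sum>k<n. \<sigma>\<^sup>2 * (c k)\<^sup>2)"
  proof (rule sum_mono)
    fix k
    assume k: "k \<in> {..<n}"
    show "(s k)\<^sup>2 * (c k)\<^sup>2 \<le> \<sigma>\<^sup>2 * (c k)\<^sup>2"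
    proof (cases "k = p")
      case False
      then have "(s k)\<^sup>2 \<le> \<sigma>\<^sup>2"
        using s s_le k by (intro power_mono) auto
      then show ?thesis
        by (rule mult_right_mono) simp
    qed (simp add: \<open>c p = 0\<close>)
  qed
  also have "\<dots> = \<sigma>\<^sup>2 * (\<Sum>m<n. (z m)\<^sup>2)"
    unfolding c_def orthonormal_parseval[OF orth, of z] by (simp add: sum_distrib_left)
  finally show ?thesis .
qed

section \<open>Discounted step sums\<close>

text \<open>\<open>L * discounted_steps \<sigma> \<alpha> k\<close> bounds the mean distance of the agents from their average at
  step \<open>k\<close>: each past step \<open>\<alpha> s\<close> perturbs consensus by at most \<open>\<alpha> s * L\<close>, and mixing damps it
  by \<open>\<sigma>\<close> per round.\<close>
definition discounted_steps :: "real \<Rightarrow> (nat \<Rightarrow> real) \<Rightarrow> nat \<Rightarrow> real" where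
  "discounted_steps \<sigma> \<alpha> k = (\<Sum>s\<in>{1..<k}. \<sigma> ^ (k - s) * \<alpha> s)"

lemma discounted_steps_1: "discounted_steps \<sigma> \<alpha> 1 = 0"
  unfolding discounted_steps_def by simp

lemma discounted_steps_Suc:
  assumes "1 \<le> k"
  shows "discounted_steps \<sigma> \<alpha> (Suc k) = \<sigma> * (discounted_steps \<sigma> \<alpha> k + \<alpha> k)"
proof -
  have "discounted_steps \<sigma> \<alpha> (Suc k) = (\<Sum>s\<in>{1..<k}. \<sigma> ^ (Suc k - s) * \<alpha> s) + \<sigma> * \<alpha> k"
    unfolding discounted_steps_def using assms by (simp add: sum.atLeastLessThan_Suc)
  also have "(\<Sum>s\<in>{1..<k}. \<sigma> ^ (Suc k - s) * \<alpha> s) = \<sigma> * discounted_steps \<sigma> \<alpha> k"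
    unfolding discounted_steps_def sum_distrib_left by (rule sum.cong) (auto simp: Suc_diff_le)
  finally show ?thesis
    by (simp add: algebra_simps)
qed

lemma discounted_steps_split:
  assumes "1 \<le> m" and "m \<le> k"
  shows "discounted_steps \<sigma> \<alpha> k = \<sigma> ^ (k - m) * discounted_steps \<sigma> \<alpha> m + (\<Sum>s\<in>{m..<k}. \<sigma> ^ (k - s) * \<alpha> s)"
proof -
  have "{1..<k} = {1..<m} \<union> {m..<k}"
    using assms by auto
  then have "discounted_steps \<sigma> \<alpha> k = (\<Sum>s\<in>{1..<m}. \<sigma> ^ (k - s) * \<alpha> s) + (\<Sum>s\<in>{m..<k}. \<sigma> ^ (k - s) * \<alpha> s)"
    unfolding discounted_steps_def by (simp add: sum.union_disjoint)
  also have "(\<Sum>s\<in>{1..<m}. \<sigma> ^ (k - s) * \<alpha> s) = \<sigma> ^ (k - m) * discounted_steps \<sigma> \<alpha> m"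
    unfolding discounted_steps_def sum_distrib_left
    by (rule sum.cong) (use assms in \<open>auto simp: power_add[symmetric]\<close>)
  finally show ?thesis .
qed

lemma geometric_tail_le:
  fixes \<sigma> :: real
  assumes "0 \<le> \<sigma>" and "\<sigma> < 1"
  shows "(\<Sum>s\<in>{m..<k}. \<sigma> ^ (k - s)) \<le> \<sigma> / (1 - \<sigma>)"
proof (induction k)
  case (Suc k)
  show ?case
  proof (cases "m \<le> k")
    case True
    have "(\<Sum>s\<in>{m..<Suc k}. \<sigma> ^ (Suc k - s)) = \<sigma> * (\<Sum>s\<in>{m..<k}. \<sigma> ^ (k - s)) + \<sigma>"
      using True by (simp add: sum.atLeastLessThan_Suc sum_distrib_left Suc_diff_le)
    also have "\<dots> \<le> \<sigma> * (\<sigma> / (1 - \<sigma>)) + \<sigma>"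
      using Suc.IH assms by (intro add_right_mono mult_left_mono) auto
    also have "\<dots> = \<sigma> / (1 - \<sigma>)"
      using assms by (simp add: field_simps)
    finally show ?thesis .
  qed (use assms in simp)
qed (use assms in simp)

lemma power_le_exp_neg:
  fixes \<sigma> :: real
  assumes "0 \<le> \<sigma>"
  shows "\<sigma> ^ j \<le> exp (- (1 - \<sigma>) * real j)"
proof -
  have "\<sigma> ^ j \<le> exp (\<sigma> - 1) ^ j"
    using assms exp_ge_add_one_self[of "\<sigma> - 1"] by (intro power_mono) auto
  also have "\<dots> = exp (- (1 - \<sigma>) * real j)"
    by (simp add: exp_of_nat_mult[symmetric] algebra_simps)
  finally show ?thesis .
qed

lemma power_half_mult_le:
  fixes \<sigma> :: real
  assumes "0 \<le> \<sigma>" and "\<sigma> < 1"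
  shows "\<sigma> ^ (k - k div 2) * real k \<le> 1 / (1 - \<sigma>)"
proof -
  define y where "y = (1 - \<sigma>) * real k"
  have y: "0 \<le> y"
    unfolding y_def using assms by simp
  have "k \<le> 2 * (k - k div 2)"
    by presburger
  then have "real k / 2 \<le> real (k - k div 2)"
    by linarith
  then have "y / 2 \<le> (1 - \<sigma>) * real (k - k div 2)"
    unfolding y_def using assms(2) mult_left_mono[of "real k / 2" "real (k - k div 2)" "1 - \<sigma>"] by simp
  then have "exp (- ((1 - \<sigma>) * real (k - k div 2))) \<le> exp (- (y / 2))"
    by (simp only: exp_le_cancel_iff neg_le_iff_le)
  then have "\<sigma> ^ (k - k div 2) \<le> exp (- (y / 2))"
    using power_le_exp_neg[OF assms(1), of "k - k div 2"] unfolding mult_minus_left by linarith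
  moreover have "y \<le> exp (y / 2)"
  proof -
    have "y \<le> (1 + y / 4)\<^sup>2"
      using zero_le_power2[of "1 - y / 4"] by (simp add: power2_eq_square algebra_simps)
    also have "\<dots> \<le> (exp (y / 4))\<^sup>2"
      using y exp_ge_add_one_self[of "y / 4"] by (intro power_mono) auto
    also have "\<dots> = exp (y / 2)"
      by (simp add: power2_eq_square flip: exp_add)
    finally show ?thesis .
  qed
  ultimately have "\<sigma> ^ (k - k div 2) * y \<le> exp (- (y / 2)) * exp (y / 2)"
    using y by (intro mult_mono) auto
  then have "\<sigma> ^ (k - k div 2) * real k * (1 - \<sigma>) \<le> 1"
    unfolding y_def by (simp add: exp_minus field_simps)
  then show ?thesis
    using assms by (simp add: pos_le_divide_eq)
qed

lemma log_bound_imp_power_le_3: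
  fixes \<sigma> R :: real
  assumes "0 \<le> \<sigma>" and "\<sigma> < 1" and "0 < R"
    and log_bound: "4 / (1 - \<sigma>) * ln R \<le> real t"
  shows "R * \<sigma> ^ (t div 2 - t div 2 div 2) \<le> 3"
proof -
  let ?q = "t div 2 - t div 2 div 2"
  have "ln R \<le> (1 - \<sigma>) * real t / 4"
    using log_bound assms(2) by (simp add: field_simps)
  then have "R \<le> exp ((1 - \<sigma>) * real t / 4)"
    using assms(3) by (metis exp_le_cancel_iff exp_ln)
  moreover have "\<sigma> ^ ?q \<le> exp (- (1 - \<sigma>) * real t / 4 + 1 / 4)"
  proof -
    have "real t - 1 \<le> 4 * real ?q"
      by linarith
    then have "(1 - \<sigma>) * real t - (1 - \<sigma>) \<le> 4 * ((1 - \<sigma>) * real ?q)"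
      using assms(2) mult_left_mono[of "real t - 1" "4 * real ?q" "1 - \<sigma>"] by (simp add: algebra_simps)
    then have "- (1 - \<sigma>) * real ?q \<le> - (1 - \<sigma>) * real t / 4 + 1 / 4"
      using assms(1) by linarith
    then show ?thesis
      using power_le_exp_neg[OF assms(1), of ?q] by (meson exp_le_cancel_iff order_trans)
  qed
  ultimately have "R * \<sigma> ^ ?q \<le> exp ((1 - \<sigma>) * real t / 4) * exp (- (1 - \<sigma>) * real t / 4 + 1 / 4)"
    using assms(1,3) by (intro mult_mono) auto
  also have "\<dots> = exp ((1 - \<sigma>) * real t / 4 + (- (1 - \<sigma>) * real t / 4 + 1 / 4))"
    by (rule exp_add[symmetric])
  also have "(1 - \<sigma>) * real t / 4 + (- (1 - \<sigma>) * real t / 4 + 1 / 4) = 1 / 4"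
    by linarith
  also have "exp (1 / 4) \<le> exp (1::real)"
    by simp
  also have "\<dots> \<le> 3"
    by (rule exp_le)
  finally show ?thesis .
qed

lemma inverse_powr_le_3:
  assumes "0 < \<beta>" and "\<beta> \<le> 1" and "0 < k" and "real k \<le> 3 * real m"
  shows "1 / real m powr \<beta> \<le> 3 / real k powr \<beta>"
proof -
  have "real k powr \<beta> / 3 \<le> real k powr \<beta> / 3 powr \<beta>"
    using assms(1,2) powr_mono[of \<beta> 1 3] by (intro divide_left_mono) auto
  also have "\<dots> = (real k / 3) powr \<beta>"
    by (simp add: powr_divide)
  also have "\<dots> \<le> real m powr \<beta>"
    using assms by (intro powr_mono2) auto
  finally have "real k powr \<beta> / 3 \<le> real m powr \<beta>" .
  moreover have "0 < real m powr \<beta>" "0 < real k powr \<beta>"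
    using assms(3,4) by simp_all
  ultimately show ?thesis
    by (simp add: field_simps)
qed

lemma powr_le_concave_step:
  fixes a r :: real
  assumes "0 \<le> a" and "0 < r" and "r < 1"
  shows "a powr r \<le> (a + 1) powr r - r * ((a + 1) powr r / (a + 1))"
proof (cases "a = 0")
  case False
  define b where "b = a + 1"
  have a: "0 < a" and b: "0 < b"
    using assms(1) False unfolding b_def by auto
  have "(a / b) powr r * 1 powr (1 - r) \<le> r * (a / b) + (1 - r) * 1"
    using assms a b by (intro Youngs_inequality_0) auto
  then have young: "(a / b) powr r \<le> 1 - r * (1 / b)"
    unfolding b_def using a by (simp add: field_simps)
  have "a powr r = b powr r * (a / b) powr r"
    using a b by (simp add: powr_divide)
  also have "\<dots> \<le> b powr r * (1 - r * (1 / b))"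
    using young by (intro mult_left_mono) auto
  finally show ?thesis
    unfolding b_def by (simp add: algebra_simps)
qed (use assms in simp)

lemma sum_inverse_powr_le:
  fixes \<beta> :: real
  assumes "0 < \<beta>" and "\<beta> < 1" and "1 \<le> m"
  shows "(\<Sum>s\<in>{1..<m}. 1 / real s powr \<beta>) \<le> (real m - 1) powr (1 - \<beta>) / (1 - \<beta>)"
  using assms(3)
proof (induction m rule: nat_induct_at_least)
  case (Suc m)
  define r where "r = 1 - \<beta>"
  have r: "0 < r" "r < 1" and m: "0 < real m"
    using assms Suc.hyps unfolding r_def by auto
  have "(real m - 1) powr r \<le> real m powr r - r * (real m powr r / real m)"
    using powr_le_concave_step[of "real m - 1" r] r Suc.hyps by simp
  also have "real m powr r / real m = 1 / real m powr \<beta>"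
    using m unfolding r_def by (simp add: powr_diff)
  finally have "(real m - 1) powr r / r \<le> (real m powr r - r * (1 / real m powr \<beta>)) / r"
    using r by (intro divide_right_mono) auto
  also have "\<dots> = real m powr r / r - 1 / real m powr \<beta>"
    using r by (simp add: field_simps)
  finally have "(real m - 1) powr r / r + 1 / real m powr \<beta> \<le> real m powr r / r"
    by simp
  moreover have "(\<Sum>s\<in>{1..<Suc m}. 1 / real s powr \<beta>) = (\<Sum>s\<in>{1..<m}. 1 / real s powr \<beta>) + 1 / real m powr \<beta>"
    using Suc.hyps by (simp add: sum.atLeastLessThan_Suc)
  ultimately show ?case
    using Suc.IH unfolding r_def by simp
qed simp

locale step_sizes =
  fixes \<sigma> :: real and \<alpha> :: "nat \<Rightarrow> real"
  assumes \<sigma>_nonneg: "0 \<le> \<sigma>" and \<sigma>_less_1: "\<sigma> < 1"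
    and \<alpha>_pos: "\<And>k. 1 \<le> k \<Longrightarrow> 0 < \<alpha> k"
    and \<alpha>_Suc_le: "\<And>k. 1 \<le> k \<Longrightarrow> \<alpha> (Suc k) \<le> \<alpha> k"
begin

lemma \<alpha>_antimono: "1 \<le> a \<Longrightarrow> a \<le> b \<Longrightarrow> \<alpha> b \<le> \<alpha> a"
  by (rule lift_Suc_antimono_le_ivl[of "{1..}"]) (use \<alpha>_Suc_le in auto)

lemma SUP_\<alpha>_eq: "(SUP k\<in>{1..}. \<alpha> k) = \<alpha> 1"
  by (rule cSup_eq_maximum) (auto intro: \<alpha>_antimono)

lemma discounted_steps_nonneg: "0 \<le> discounted_steps \<sigma> \<alpha> k"
  unfolding discounted_steps_def using \<sigma>_nonneg \<alpha>_pos
  by (intro sum_nonneg mult_nonneg_nonneg) (auto intro: less_imp_le)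

lemma discounted_steps_le_sum: "discounted_steps \<sigma> \<alpha> k \<le> (\<Sum>s\<in>{1..<k}. \<alpha> s)"
  unfolding discounted_steps_def
proof (rule sum_mono)
  fix s
  assume "s \<in> {1..<k}"
  then show "\<sigma> ^ (k - s) * \<alpha> s \<le> \<alpha> s"
    using \<sigma>_nonneg \<sigma>_less_1 \<alpha>_pos[of s] by (simp add: mult_left_le_one_le power_le_one)
qed

lemma discounted_tail_le:
  assumes "1 \<le> m"
  shows "(\<Sum>s\<in>{m..<k}. \<sigma> ^ (k - s) * \<alpha> s) \<le> \<alpha> m / (1 - \<sigma>)"
proof -
  have "(\<Sum>s\<in>{m..<k}. \<sigma> ^ (k - s) * \<alpha> s) \<le> (\<Sum>s\<in>{m..<k}. \<sigma> ^ (k - s) * \<alpha> m)"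
    using assms \<sigma>_nonneg by (intro sum_mono mult_left_mono \<alpha>_antimono) auto
  also have "\<dots> = \<alpha> m * (\<Sum>s\<in>{m..<k}. \<sigma> ^ (k - s))"
    by (simp add: sum_distrib_left mult.commute)
  also have "\<dots> \<le> \<alpha> m * (\<sigma> / (1 - \<sigma>))"
    using geometric_tail_le[OF \<sigma>_nonneg \<sigma>_less_1] \<alpha>_pos[OF assms] by (intro mult_left_mono) auto
  also have "\<dots> \<le> \<alpha> m * (1 / (1 - \<sigma>))"
    using \<alpha>_pos[OF assms] \<sigma>_less_1 by (intro mult_left_mono divide_right_mono) auto
  finally show ?thesis
    by simp
qed

text \<open>Under the halving condition \<open>\<alpha> (t div 2) \<le> C * \<alpha> t\<close>: the steps before \<open>k div 2\<close> are
  damped by at least \<open>\<sigma> ^ (k - k div 2)\<close>, the later ones are comparable to \<open>\<alpha> k\<close>.\<close>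
lemma discounted_steps_le_halving:
  assumes halving: "\<And>t. 2 \<le> t \<Longrightarrow> \<alpha> (t div 2) \<le> C * \<alpha> t" and "1 \<le> C"
    and k: "t div 2 \<le> k" "k \<le> t" and "2 \<le> t"
  shows "discounted_steps \<sigma> \<alpha> k \<le> \<sigma> ^ (t div 2 - t div 2 div 2) * (real t * \<alpha> 1) + C * \<alpha> k / (1 - \<sigma>)"
proof (cases "k = 1")
  case True
  have "0 \<le> \<sigma> ^ (t div 2 - t div 2 div 2) * (real t * \<alpha> 1)" "0 \<le> C * \<alpha> k / (1 - \<sigma>)"
    using \<sigma>_nonneg \<sigma>_less_1 \<alpha>_pos[of 1] \<alpha>_pos[of k] \<open>1 \<le> C\<close> True by simp_all
  then show ?thesis
    using True discounted_steps_1[of \<sigma> \<alpha>] by (metis add_nonneg_nonneg)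
next
  case False
  then have "2 \<le> k"
    using k \<open>2 \<le> t\<close> by auto
  define m where "m = k div 2"
  have m: "1 \<le> m" "m \<le> k"
    using \<open>2 \<le> k\<close> unfolding m_def by auto
  have "discounted_steps \<sigma> \<alpha> m \<le> (\<Sum>s\<in>{1..<m}. \<alpha> s)"
    by (rule discounted_steps_le_sum)
  also have "\<dots> \<le> (\<Sum>s\<in>{1..<m}. \<alpha> 1)"
    by (intro sum_mono \<alpha>_antimono) auto
  also have "\<dots> \<le> real t * \<alpha> 1"
    using m k \<alpha>_pos[of 1] by (simp add: mult_right_mono)
  finally have "\<sigma> ^ (k - m) * discounted_steps \<sigma> \<alpha> m \<le> \<sigma> ^ (t div 2 - t div 2 div 2) * (real t * \<alpha> 1)"
    using k \<sigma>_nonneg \<sigma>_less_1 discounted_steps_nonneg unfolding m_def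
    by (intro mult_mono power_decreasing) auto
  moreover have "(\<Sum>s\<in>{m..<k}. \<sigma> ^ (k - s) * \<alpha> s) \<le> C * \<alpha> k / (1 - \<sigma>)"
    using discounted_tail_le[OF m(1), of k] halving[OF \<open>2 \<le> k\<close>] \<sigma>_less_1 unfolding m_def
    by (smt (verit) divide_right_mono)
  ultimately show ?thesis
    using discounted_steps_split[OF m, of \<sigma> \<alpha>] by linarith
qed

lemma discounted_steps_inverse_powr_le:
  assumes \<alpha>_def: "\<alpha> = (\<lambda>k. 1 / real k powr \<beta>)" and \<beta>: "0 < \<beta>" "\<beta> < 1" and "1 \<le> k"
  shows "discounted_steps \<sigma> \<alpha> k \<le> (1 / (1 - \<beta>) + 3) * \<alpha> k / (1 - \<sigma>)"
proof (cases "k = 1")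
  case True
  have "0 \<le> (1 / (1 - \<beta>) + 3) * \<alpha> k / (1 - \<sigma>)"
    using \<sigma>_less_1 \<beta> \<alpha>_pos[of k] True by simp
  then show ?thesis
    using True discounted_steps_1[of \<sigma> \<alpha>] by metis
next
  case False
  then have "2 \<le> k"
    using \<open>1 \<le> k\<close> by simp
  define m where "m = k div 2"
  have m: "1 \<le> m" "m \<le> k"
    using \<open>2 \<le> k\<close> unfolding m_def by auto
  have "k \<le> 3 * m"
    unfolding m_def using \<open>2 \<le> k\<close> by presburger
  then have "\<alpha> m \<le> 3 * \<alpha> k"
    unfolding \<alpha>_def using inverse_powr_le_3[of \<beta> k m] \<beta> \<open>2 \<le> k\<close> by simp
  then have tail: "(\<Sum>s\<in>{m..<k}. \<sigma> ^ (k - s) * \<alpha> s) \<le> 3 * \<alpha> k / (1 - \<sigma>)"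
    using discounted_tail_le[OF m(1), of k] \<sigma>_less_1 by (smt (verit) divide_right_mono)
  have "discounted_steps \<sigma> \<alpha> m \<le> (real m - 1) powr (1 - \<beta>) / (1 - \<beta>)"
    using discounted_steps_le_sum sum_inverse_powr_le[OF \<beta> m(1)] unfolding \<alpha>_def by (rule order_trans)
  also have "\<dots> \<le> real k powr (1 - \<beta>) / (1 - \<beta>)"
    using m \<beta> by (intro divide_right_mono powr_mono2) auto
  finally have "\<sigma> ^ (k - m) * discounted_steps \<sigma> \<alpha> m \<le> \<sigma> ^ (k - m) * (real k powr (1 - \<beta>) / (1 - \<beta>))"
    using \<sigma>_nonneg by (intro mult_left_mono) auto
  also have "\<dots> = (\<sigma> ^ (k - m) * real k) * \<alpha> k / (1 - \<beta>)"
    using \<open>2 \<le> k\<close> unfolding \<alpha>_def by (simp add: powr_diff)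
  also have "\<dots> \<le> (1 / (1 - \<sigma>)) * \<alpha> k / (1 - \<beta>)"
    using power_half_mult_le[OF \<sigma>_nonneg \<sigma>_less_1, of k] \<alpha>_pos[of k] \<open>1 \<le> k\<close> \<beta>
    unfolding m_def by (intro divide_right_mono mult_right_mono) auto
  also have "\<dots> = (1 / (1 - \<beta>)) * \<alpha> k / (1 - \<sigma>)"
    by simp
  finally have head: "\<sigma> ^ (k - m) * discounted_steps \<sigma> \<alpha> m \<le> (1 / (1 - \<beta>)) * \<alpha> k / (1 - \<sigma>)" .
  have "(1 / (1 - \<beta>)) * \<alpha> k / (1 - \<sigma>) + 3 * \<alpha> k / (1 - \<sigma>) = (1 / (1 - \<beta>) + 3) * \<alpha> k / (1 - \<sigma>)"
    by (simp add: distrib_right add_divide_distrib)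
  then show ?thesis
    using discounted_steps_split[OF m, of \<sigma> \<alpha>] head tail by linarith
qed


lemma window_sum_le_sq_sum:
  assumes "2 \<le> t"
  shows "(\<Sum>k=t div 2..t. \<alpha> k) \<le> (\<Sum>k=t div 2..t. (\<alpha> k)\<^sup>2) / \<alpha> t"
proof -
  have "\<alpha> k \<le> (\<alpha> k)\<^sup>2 / \<alpha> t" if "k \<in> {t div 2..t}" for k
  proof -
    have "\<alpha> t \<le> \<alpha> k" "0 < \<alpha> k" "0 < \<alpha> t"
      using that assms by (auto intro: \<alpha>_antimono \<alpha>_pos)
    then show ?thesis
      by (simp add: pos_le_divide_eq power2_eq_square mult_left_mono)
  qed
  then show ?thesis
    unfolding sum_divide_distrib by (rule sum_mono)
qed

lemma window_sq_sum_le_tail: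
  assumes "summable (\<lambda>k. (\<alpha> (Suc k))\<^sup>2)"
  shows "(\<Sum>k=t div 2..t. (\<alpha> k)\<^sup>2) \<le> (\<Sum>k. (\<alpha> (k + t div 2))\<^sup>2)"
proof -
  have "summable (\<lambda>k. (\<alpha> (k + t div 2))\<^sup>2)"
    using assms summable_Suc_iff summable_iff_shift[of "\<lambda>k. (\<alpha> k)\<^sup>2" "t div 2"] by blast
  moreover have "(\<Sum>k=t div 2..t. (\<alpha> k)\<^sup>2) = (\<Sum>i\<in>{0..t - t div 2}. (\<alpha> (i + t div 2))\<^sup>2)"
    by (rule sum.reindex_bij_witness[of _ "\<lambda>i. i + t div 2" "\<lambda>k. k - t div 2"]) auto
  ultimately show ?thesis
    by (simp add: sum_le_suminf)
qed

lemma window_discounted_le_halving: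
  assumes "\<And>t. 2 \<le> t \<Longrightarrow> \<alpha> (t div 2) \<le> C * \<alpha> t" and "1 \<le> C" and "2 \<le> t"
  shows "(\<Sum>k=t div 2..t. \<alpha> k * discounted_steps \<sigma> \<alpha> k)
    \<le> \<sigma> ^ (t div 2 - t div 2 div 2) * (real t * \<alpha> 1) * (\<Sum>k=t div 2..t. \<alpha> k)
      + C / (1 - \<sigma>) * (\<Sum>k=t div 2..t. (\<alpha> k)\<^sup>2)"
proof -
  have "(\<Sum>k=t div 2..t. \<alpha> k * discounted_steps \<sigma> \<alpha> k)
      \<le> (\<Sum>k=t div 2..t. \<alpha> k * (\<sigma> ^ (t div 2 - t div 2 div 2) * (real t * \<alpha> 1) + C * \<alpha> k / (1 - \<sigma>)))"
    using assms \<alpha>_pos by (intro sum_mono mult_left_mono discounted_steps_le_halving) (auto intro: less_imp_le)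
  also have "\<dots> = (\<Sum>k=t div 2..t. \<sigma> ^ (t div 2 - t div 2 div 2) * (real t * \<alpha> 1) * \<alpha> k + C / (1 - \<sigma>) * (\<alpha> k)\<^sup>2)"
    by (intro sum.cong) (simp_all add: algebra_simps power2_eq_square)
  also have "\<dots> = \<sigma> ^ (t div 2 - t div 2 div 2) * (real t * \<alpha> 1) * (\<Sum>k=t div 2..t. \<alpha> k)
      + C / (1 - \<sigma>) * (\<Sum>k=t div 2..t. (\<alpha> k)\<^sup>2)"
    by (simp add: sum.distrib sum_distrib_left)
  finally show ?thesis .
qed

lemma halving_const_ge_1:
  assumes "\<And>t. 2 \<le> t \<Longrightarrow> \<alpha> (t div 2) \<le> C * \<alpha> t"
  shows "1 \<le> C"
proof (rule ccontr)
  assume "\<not> 1 \<le> C"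
  then have "C * \<alpha> 2 < \<alpha> 2"
    using \<alpha>_pos[of 2] by simp
  moreover have "\<alpha> 1 \<le> C * \<alpha> 2" "\<alpha> 2 \<le> \<alpha> 1"
    using assms[of 2] \<alpha>_antimono[of 1 2] by simp_all
  ultimately show False
    by simp
qed

lemma inverse_powr_window_bounds:
  assumes \<alpha>_def: "\<alpha> = (\<lambda>k. 1 / real k powr \<beta>)" and \<beta>: "0 < \<beta>" "\<beta> < 1" and "2 \<le> t"
  shows "real t / (2 * real t powr \<beta>) \<le> (\<Sum>k=t div 2..t. \<alpha> k)"
    and "(\<Sum>k=t div 2..t. (\<alpha> k)\<^sup>2) \<le> 9 * real t / (real t powr \<beta>)\<^sup>2"
proof -
  let ?K = "{t div 2..t}" and ?tb = "real t powr \<beta>"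
  have tb: "0 < ?tb"
    using assms(4) by simp
  have "t \<le> 2 * (t + 1 - t div 2)" "t + 1 - t div 2 \<le> t"
    using assms(4) by presburger+
  then have card: "real t \<le> 2 * real (card ?K)" "real (card ?K) \<le> real t"
    by simp_all
  have "1 / ?tb \<le> \<alpha> k" if "k \<in> ?K" for k
    using that assms \<beta> unfolding \<alpha>_def by (intro divide_left_mono powr_mono2) auto
  then have "real (card ?K) * (1 / ?tb) \<le> (\<Sum>k\<in>?K. \<alpha> k)"
    using sum_mono[of ?K "\<lambda>_. 1 / ?tb" \<alpha>] by simp
  then show "real t / (2 * ?tb) \<le> (\<Sum>k\<in>?K. \<alpha> k)"
    using card tb by (simp add: field_simps)
  have "\<alpha> k \<le> 3 / ?tb" if "k \<in> ?K" for k
  proof -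
    have "t div 2 \<le> k"
      using that by simp
    then have "t \<le> 3 * k"
      using assms(4) by presburger
    then show ?thesis
      unfolding \<alpha>_def using inverse_powr_le_3[of \<beta> t k] \<beta> assms(4) by simp
  qed
  then have "(\<Sum>k\<in>?K. (\<alpha> k)\<^sup>2) \<le> (\<Sum>k\<in>?K. (3 / ?tb)\<^sup>2)"
    using \<alpha>_pos assms(4) by (intro sum_mono power_mono) (auto intro: less_imp_le)
  also have "\<dots> = real (card ?K) * (9 / ?tb\<^sup>2)"
    by (simp add: power_divide)
  also have "\<dots> \<le> real t * (9 / ?tb\<^sup>2)"
    using card(2) by (intro mult_right_mono) simp_all
  finally show "(\<Sum>k\<in>?K. (\<alpha> k)\<^sup>2) \<le> 9 * real t / ?tb\<^sup>2"
    by (simp add: mult.commute)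
qed

lemma window_sum_inverse_le:
  assumes Ca: "\<And>t. 1 \<le> t \<Longrightarrow> (\<Sum>k=1..t. \<alpha> k) \<le> Ca * (\<Sum>k=(t + 1) div 2..t. \<alpha> k)" and t: "2 \<le> t"
  shows "1 / (\<Sum>k=t div 2..t. \<alpha> k) \<le> Ca / (\<Sum>k=1..t. \<alpha> k)"
proof -
  have T_pos: "0 < (\<Sum>k=1..t. \<alpha> k)" and A_pos: "0 < (\<Sum>k=t div 2..t. \<alpha> k)"
    using t \<alpha>_pos by (auto intro!: sum_pos)
  have "1 \<le> t div 2"
    using t by simp
  then have half: "(\<Sum>k=(t + 1) div 2..t. \<alpha> k) \<le> (\<Sum>k=t div 2..t. \<alpha> k)"
    using \<alpha>_pos by (intro sum_mono2) (auto intro: less_imp_le)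
  have "0 \<le> (\<Sum>k=(t + 1) div 2..t. \<alpha> k)"
    using \<alpha>_pos t by (intro sum_nonneg) (auto intro: less_imp_le)
  have Ca_nonneg: "0 \<le> Ca"
  proof (rule ccontr)
    assume "\<not> 0 \<le> Ca"
    then have "Ca * (\<Sum>k=(t + 1) div 2..t. \<alpha> k) \<le> 0"
      using \<open>0 \<le> (\<Sum>k=(t + 1) div 2..t. \<alpha> k)\<close> by (simp add: mult_nonpos_nonneg)
    then show False
      using Ca[of t] T_pos t by simp
  qed
  have "(\<Sum>k=1..t. \<alpha> k) \<le> Ca * (\<Sum>k=(t + 1) div 2..t. \<alpha> k)"
    using Ca[of t] t by simp
  also have "\<dots> \<le> Ca * (\<Sum>k=t div 2..t. \<alpha> k)"
    using half Ca_nonneg by (rule mult_left_mono)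
  finally show ?thesis
    using A_pos T_pos by (simp add: field_simps)
qed

lemma early_steps_le:
  assumes halving: "\<And>t. 2 \<le> t \<Longrightarrow> \<alpha> (t div 2) \<le> C * \<alpha> t"
    and summable: "summable (\<lambda>k. (\<alpha> (Suc k))\<^sup>2)" and t: "2 \<le> t"
    and log: "4 / (1 - \<sigma>) * ln ((1 - \<sigma>) * real t * (SUP k\<in>{1..}. \<alpha> k) / (C * \<alpha> t)) \<le> real t"
  shows "\<sigma> ^ (t div 2 - t div 2 div 2) * (real t * \<alpha> 1) * (\<Sum>k=t div 2..t. \<alpha> k)
    \<le> 3 * (C / (1 - \<sigma>) * (\<Sum>k. (\<alpha> (k + t div 2))\<^sup>2))"
proof -
  define \<Sigma> where "\<Sigma> = (\<Sum>k. (\<alpha> (k + t div 2))\<^sup>2)"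
  define R where "R = (1 - \<sigma>) * real t * \<alpha> 1 / (C * \<alpha> t)"
  let ?q = "t div 2 - t div 2 div 2"
  have C: "1 \<le> C"
    by (rule halving_const_ge_1[OF halving])
  have \<sigma>: "0 < 1 - \<sigma>" and \<alpha>t: "0 < \<alpha> t" and \<alpha>1: "0 < \<alpha> 1"
    using \<sigma>_less_1 \<alpha>_pos t by auto
  have "(\<Sum>k=t div 2..t. \<alpha> k) \<le> (\<Sum>k=t div 2..t. (\<alpha> k)\<^sup>2) / \<alpha> t"
    by (rule window_sum_le_sq_sum[OF t])
  also have "\<dots> \<le> \<Sigma> / \<alpha> t"
    unfolding \<Sigma>_def using divide_right_mono[OF window_sq_sum_le_tail[OF summable, of t], of "\<alpha> t"] \<alpha>t
    by simp
  finally have "\<sigma> ^ ?q * (real t * \<alpha> 1) * (\<Sum>k=t div 2..t. \<alpha> k) \<le> \<sigma> ^ ?q * (real t * \<alpha> 1) * (\<Sigma> / \<alpha> t)"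
    using \<sigma>_nonneg \<alpha>1 by (intro mult_left_mono) auto
  also have "\<dots> = (R * \<sigma> ^ ?q) * (C / (1 - \<sigma>) * \<Sigma>)"
    unfolding R_def using C \<sigma> \<alpha>t by (simp add: field_simps)
  also have "\<dots> \<le> 3 * (C / (1 - \<sigma>) * \<Sigma>)"
  proof (rule mult_right_mono)
    show "R * \<sigma> ^ ?q \<le> 3"
      using log_bound_imp_power_le_3[OF \<sigma>_nonneg \<sigma>_less_1, of R t] log \<sigma> \<alpha>t \<alpha>1 C t
      unfolding R_def SUP_\<alpha>_eq by simp
    have "0 \<le> (\<Sum>k=t div 2..t. (\<alpha> k)\<^sup>2)"
      by (simp add: sum_nonneg)
    then have "0 \<le> \<Sigma>"
      unfolding \<Sigma>_def using window_sq_sum_le_tail[OF summable, of t] by linarith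
    then show "0 \<le> C / (1 - \<sigma>) * \<Sigma>"
      using C \<sigma> by (intro mult_nonneg_nonneg divide_nonneg_pos) auto
  qed
  finally show ?thesis
    unfolding \<Sigma>_def .
qed

lemma window_errors_le_general:
  assumes halving: "\<And>t. 2 \<le> t \<Longrightarrow> \<alpha> (t div 2) \<le> C * \<alpha> t"
    and summable: "summable (\<lambda>k. (\<alpha> (Suc k))\<^sup>2)" and t: "2 \<le> t"
    and log: "4 / (1 - \<sigma>) * ln ((1 - \<sigma>) * real t * (SUP k\<in>{1..}. \<alpha> k) / (C * \<alpha> t)) \<le> real t"
    and tail: "(\<Sum>k. (\<alpha> (k + t div 2))\<^sup>2) \<le> D\<^sup>2 * (1 - \<sigma>) / (10 * C * L\<^sup>2)"
  shows "L\<^sup>2 * (\<Sum>k=t div 2..t. (\<alpha> k)\<^sup>2) + 2 * L\<^sup>2 * (\<Sum>k=t div 2..t. \<alpha> k * discounted_steps \<sigma> \<alpha> k) \<le> D\<^sup>2"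
proof -
  define P where "P = (\<Sum>k=t div 2..t. (\<alpha> k)\<^sup>2)"
  define S where "S = (\<Sum>k=t div 2..t. \<alpha> k * discounted_steps \<sigma> \<alpha> k)"
  define \<Sigma> where "\<Sigma> = (\<Sum>k. (\<alpha> (k + t div 2))\<^sup>2)"
  define Y where "Y = C / (1 - \<sigma>) * \<Sigma>"
  have C: "1 \<le> C"
    by (rule halving_const_ge_1[OF halving])
  have \<sigma>: "0 < 1 - \<sigma>"
    using \<sigma>_less_1 by simp
  have P_le: "P \<le> \<Sigma>"
    unfolding P_def \<Sigma>_def by (rule window_sq_sum_le_tail[OF summable])
  moreover have "0 \<le> P"
    unfolding P_def by (simp add: sum_nonneg)
  moreover have "1 \<le> C / (1 - \<sigma>)"
    using C \<sigma> \<sigma>_nonneg by (simp add: field_simps)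
  ultimately have "\<Sigma> \<le> Y"
    unfolding Y_def by (metis dual_order.trans mult_le_cancel_right1 not_le)
  have "S \<le> 3 * Y + C / (1 - \<sigma>) * P"
    using window_discounted_le_halving[OF halving C t] early_steps_le[OF halving summable t log]
    unfolding S_def P_def Y_def \<Sigma>_def by linarith
  also have "\<dots> \<le> 3 * Y + Y"
    using P_le C \<sigma> unfolding Y_def by (intro add_left_mono mult_left_mono) auto
  finally have "P + 2 * S \<le> 9 * Y"
    using P_le \<open>\<Sigma> \<le> Y\<close> by linarith
  then have "L\<^sup>2 * P + 2 * L\<^sup>2 * S \<le> 9 * (L\<^sup>2 * Y)"
    using mult_left_mono[of "P + 2 * S" "9 * Y" "L\<^sup>2"] by (simp add: algebra_simps)
  also have "\<dots> \<le> D\<^sup>2"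
  proof (cases "L = 0")
    case False
    then have "\<Sigma> * (10 * C * L\<^sup>2) \<le> D\<^sup>2 * (1 - \<sigma>)"
      using tail C unfolding \<Sigma>_def by (simp add: pos_le_divide_eq)
    then have "10 * (L\<^sup>2 * Y) \<le> D\<^sup>2"
      unfolding Y_def using \<sigma> by (simp add: field_simps)
    moreover have "0 \<le> L\<^sup>2 * Y"
      using \<open>\<Sigma> \<le> Y\<close> P_le \<open>0 \<le> P\<close> by simp
    ultimately show ?thesis
      by linarith
  qed simp
  finally show ?thesis
    unfolding P_def S_def .
qed

lemma window_sq_sum_inverse_powr_le:
  assumes \<alpha>_def: "\<alpha> = (\<lambda>k. 1 / real k powr \<beta>)" and \<beta>: "0 < \<beta>" "\<beta> < 1" and t: "2 \<le> t"
    and "D \<noteq> 0" and L: "L\<^sup>2 / (D\<^sup>2 * (1 - \<sigma>)) \<le> real t powr (2 * \<beta> - 1)"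
  shows "L\<^sup>2 * (\<Sum>k=t div 2..t. (\<alpha> k)\<^sup>2) \<le> 9 * (D\<^sup>2 * (1 - \<sigma>))"
proof -
  define tb where "tb = real t powr \<beta>"
  have \<sigma>: "0 < 1 - \<sigma>" and tb: "0 < tb"
    using \<sigma>_less_1 t unfolding tb_def by auto
  have "real t powr (2 * \<beta> - 1) = tb\<^sup>2 / real t"
    unfolding tb_def using t by (simp add: powr_diff powr_add[symmetric] power2_eq_square)
  then have "L\<^sup>2 \<le> tb\<^sup>2 / real t * (D\<^sup>2 * (1 - \<sigma>))"
    using L \<open>D \<noteq> 0\<close> \<sigma> by (simp add: pos_divide_le_eq)
  then have L_le: "L\<^sup>2 * real t / tb\<^sup>2 \<le> D\<^sup>2 * (1 - \<sigma>)"
    using t tb by (simp add: field_simps)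
  have "L\<^sup>2 * (\<Sum>k=t div 2..t. (\<alpha> k)\<^sup>2) \<le> L\<^sup>2 * (9 * real t / tb\<^sup>2)"
    using inverse_powr_window_bounds(2)[OF \<alpha>_def \<beta> t] unfolding tb_def
    by (rule mult_left_mono) simp
  also have "\<dots> = 9 * (L\<^sup>2 * real t / tb\<^sup>2)"
    by simp
  also have "\<dots> \<le> 9 * (D\<^sup>2 * (1 - \<sigma>))"
    using L_le by simp
  finally show ?thesis .
qed

lemma window_errors_le_inverse_powr:
  assumes \<alpha>_def: "\<alpha> = (\<lambda>k. 1 / real k powr \<beta>)" and \<beta>: "0 < \<beta>" "\<beta> < 1" and t: "2 \<le> t"
    and "D \<noteq> 0" and L: "L\<^sup>2 / (D\<^sup>2 * (1 - \<sigma>)) \<le> real t powr (2 * \<beta> - 1)"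
  shows "L\<^sup>2 * (\<Sum>k=t div 2..t. (\<alpha> k)\<^sup>2) + 2 * L\<^sup>2 * (\<Sum>k=t div 2..t. \<alpha> k * discounted_steps \<sigma> \<alpha> k)
    \<le> (63 + 18 / (1 - \<beta>)) * D\<^sup>2"
proof -
  define P where "P = (\<Sum>k=t div 2..t. (\<alpha> k)\<^sup>2)"
  define C where "C = 1 / (1 - \<beta>) + 3"
  have \<sigma>: "0 < 1 - \<sigma>" and C: "0 \<le> C"
    using \<sigma>_less_1 \<beta> unfolding C_def by auto
  have "(\<Sum>k=t div 2..t. \<alpha> k * discounted_steps \<sigma> \<alpha> k) \<le> (\<Sum>k=t div 2..t. \<alpha> k * (C * \<alpha> k / (1 - \<sigma>)))"
    using discounted_steps_inverse_powr_le[OF \<alpha>_def \<beta>] \<alpha>_pos t unfolding C_def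
    by (intro sum_mono mult_left_mono) (auto intro: less_imp_le)
  also have "\<dots> = C / (1 - \<sigma>) * P"
    unfolding P_def by (simp add: sum_distrib_left power2_eq_square mult_ac)
  finally have "2 * L\<^sup>2 * (\<Sum>k=t div 2..t. \<alpha> k * discounted_steps \<sigma> \<alpha> k) \<le> 2 * L\<^sup>2 * (C / (1 - \<sigma>) * P)"
    by (intro mult_left_mono) auto
  moreover have "L\<^sup>2 * P \<le> L\<^sup>2 * P / (1 - \<sigma>)"
    using \<sigma>_nonneg \<sigma> mult_right_le_one_le[of "L\<^sup>2 * P" "1 - \<sigma>"] unfolding P_def
    by (simp add: le_divide_eq sum_nonneg)
  moreover have "(1 + 2 * C) * (L\<^sup>2 * P / (1 - \<sigma>)) = L\<^sup>2 * P / (1 - \<sigma>) + 2 * L\<^sup>2 * (C / (1 - \<sigma>) * P)"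
    by (simp add: divide_inverse algebra_simps)
  ultimately have "L\<^sup>2 * P + 2 * L\<^sup>2 * (\<Sum>k=t div 2..t. \<alpha> k * discounted_steps \<sigma> \<alpha> k)
      \<le> (1 + 2 * C) * (L\<^sup>2 * P / (1 - \<sigma>))"
    by linarith
  also have "\<dots> \<le> (1 + 2 * C) * (9 * D\<^sup>2)"
    using window_sq_sum_inverse_powr_le[OF assms] \<sigma> C unfolding P_def
    by (intro mult_left_mono) (simp_all add: pos_divide_le_eq)
  also have "\<dots> = (63 + 18 / (1 - \<beta>)) * D\<^sup>2"
    unfolding C_def by (simp add: algebra_simps)
  finally show ?thesis
    unfolding P_def .
qed

end

section \<open>The distributed projected subgradient iteration\<close>

locale dsgd = step_sizes \<sigma> \<alpha>
  for \<sigma> :: real and \<alpha> :: "nat \<Rightarrow> real" +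
  fixes n d :: nat and f :: "nat \<Rightarrow> (nat \<Rightarrow> real) \<Rightarrow> real" and L :: real
    and \<Omega> :: "(nat \<Rightarrow> real) set" and D :: real and W :: "nat \<Rightarrow> nat \<Rightarrow> real"
    and x g :: "nat \<Rightarrow> nat \<Rightarrow> (nat \<Rightarrow> real)" and xs :: "nat \<Rightarrow> real"
  assumes two_le_n: "2 \<le> n"
    and convex_f: "\<And>i. i < n \<Longrightarrow> cvx_fun d (f i)"
    and subgrad_bounded: "\<And>i. i < n \<Longrightarrow> \<forall>y\<in>Rd d. \<forall>v. subgrad d (f i) y v \<longrightarrow> enorm d v \<le> L"
    and convex_\<Omega>: "cvx_set d \<Omega>" and closed_\<Omega>: "closed_set d \<Omega>"
    and diam_\<Omega>: "\<And>y z. y \<in> \<Omega> \<Longrightarrow> z \<in> \<Omega> \<Longrightarrow> enorm d (vdiff y z) \<le> D"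
    and xs_in_\<Omega>: "xs \<in> \<Omega>"
    and W_doubly_stochastic: "doubly_stochastic n W"
    and W_second_singular_value: "second_singular_value n W \<sigma>"
    and x_1: "\<exists>x0\<in>\<Omega>. \<forall>i<n. x 1 i = x0"
    and g_subgrad: "\<And>t i. 1 \<le> t \<Longrightarrow> i < n \<Longrightarrow> subgrad d (f i) (x t i) (g t i)"
    and x_Suc: "\<And>t i. 1 \<le> t \<Longrightarrow> i < n \<Longrightarrow>
      x (Suc t) i = (\<lambda>j. \<Sum>m<n. W i m * proj d \<Omega> (vdiff (x t m) (vscale (\<alpha> t) (g t m))) j)"
begin

definition local_step :: "nat \<Rightarrow> nat \<Rightarrow> nat \<Rightarrow> real" where
  "local_step k m = proj d \<Omega> (vdiff (x k m) (vscale (\<alpha> k) (g k m)))"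

lemma x_Suc_eq: "1 \<le> t \<Longrightarrow> i < n \<Longrightarrow> x (Suc t) i = (\<lambda>j. \<Sum>m<n. W i m * local_step t m j)"
  unfolding local_step_def by (rule x_Suc)

lemma W_nonneg: "i < n \<Longrightarrow> j < n \<Longrightarrow> 0 \<le> W i j"
  and W_row_sum: "i < n \<Longrightarrow> (\<Sum>j<n. W i j) = 1"
  and W_col_sum: "j < n \<Longrightarrow> (\<Sum>i<n. W i j) = 1"
  using W_doubly_stochastic unfolding doubly_stochastic_def by blast+

lemma \<Omega>_subset_Rd: "\<Omega> \<subseteq> Rd d"
  using convex_\<Omega> unfolding cvx_set_def by blast

lemma local_step_in_\<Omega>: "local_step k m \<in> \<Omega>"
  unfolding local_step_def using convex_\<Omega> closed_\<Omega> xs_in_\<Omega> by (intro proj_in) auto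

lemma x_in_\<Omega>: "1 \<le> k \<Longrightarrow> i < n \<Longrightarrow> x k i \<in> \<Omega>"
proof (induction k arbitrary: i rule: nat_induct_at_least)
  case base
  then show ?case
    using x_1 by auto
next
  case (Suc k)
  have "(\<lambda>j. \<Sum>m<n. W i m * local_step k m j) \<in> \<Omega>"
    using Suc.prems local_step_in_\<Omega> W_nonneg W_row_sum by (intro cvx_set_sum[OF convex_\<Omega>]) auto
  then show ?case
    using x_Suc_eq[OF Suc.hyps Suc.prems] by simp
qed

lemma x_in_Rd: "1 \<le> k \<Longrightarrow> i < n \<Longrightarrow> x k i \<in> Rd d"
  using x_in_\<Omega> \<Omega>_subset_Rd by blast

lemma xbar_in_\<Omega>: "1 \<le> k \<Longrightarrow> xbar n x k \<in> \<Omega>"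
proof -
  assume "1 \<le> k"
  then have "(\<lambda>j. \<Sum>m<n. (1 / real n) * x k m j) \<in> \<Omega>"
    using x_in_\<Omega> two_le_n by (intro cvx_set_sum[OF convex_\<Omega>]) auto
  then show ?thesis
    unfolding xbar_def by (simp add: sum_distrib_left)
qed

lemma xbar_in_Rd: "1 \<le> k \<Longrightarrow> xbar n x k \<in> Rd d"
  using xbar_in_\<Omega> \<Omega>_subset_Rd by blast

lemma g_norm_le: "1 \<le> k \<Longrightarrow> m < n \<Longrightarrow> enorm d (g k m) \<le> L"
  using subgrad_bounded x_in_Rd g_subgrad by blast

lemma L_nonneg: "0 \<le> L"
  using g_norm_le[of 1 0] enorm_nonneg[of d "g 1 0"] two_le_n by linarith

lemma local_step_dist_le:
  assumes k: "1 \<le> k" and m: "m < n"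
  shows "sqnorm d (vdiff (local_step k m) (x k m)) \<le> (\<alpha> k * L)\<^sup>2"
proof -
  have "sqnorm d (vdiff (local_step k m) (x k m))
      \<le> sqnorm d (vdiff (vdiff (x k m) (vscale (\<alpha> k) (g k m))) (x k m))"
    unfolding local_step_def enorm_le_iff_sqnorm_le[symmetric]
    by (rule proj_closer[OF convex_\<Omega> closed_\<Omega> x_in_\<Omega>[OF k m]])
  also have "vdiff (vdiff (x k m) (vscale (\<alpha> k) (g k m))) (x k m) = (\<lambda>j. (- \<alpha> k) * g k m j)"
    unfolding vdiff_def vscale_def by auto
  also have "sqnorm d \<dots> = (\<alpha> k)\<^sup>2 * sqnorm d (g k m)"
    by (subst sqnorm_scale) simp
  also have "\<dots> \<le> (\<alpha> k)\<^sup>2 * L\<^sup>2"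
    using sqnorm_le_power2[OF g_norm_le[OF k m]] by (intro mult_left_mono) auto
  finally show ?thesis
    by (simp add: power_mult_distrib)
qed

lemma local_step_descent:
  assumes k: "1 \<le> k" and m: "m < n"
  shows "sqnorm d (vdiff (local_step k m) xs)
    \<le> sqnorm d (vdiff (x k m) xs) - 2 * \<alpha> k * ip d (g k m) (vdiff (x k m) xs) + (\<alpha> k * L)\<^sup>2"
proof -
  have "sqnorm d (vdiff (local_step k m) xs) \<le> sqnorm d (vdiff (vdiff (x k m) (vscale (\<alpha> k) (g k m))) xs)"
    unfolding local_step_def enorm_le_iff_sqnorm_le[symmetric]
    by (rule proj_closer[OF convex_\<Omega> closed_\<Omega> xs_in_\<Omega>])
  also have "vdiff (vdiff (x k m) (vscale (\<alpha> k) (g k m))) xs = (\<lambda>j. vdiff (x k m) xs j - \<alpha> k * g k m j)"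
    unfolding vdiff_def vscale_def by auto
  also have "sqnorm d \<dots> = sqnorm d (vdiff (x k m) xs) - 2 * \<alpha> k * ip d (g k m) (vdiff (x k m) xs)
      + (\<alpha> k)\<^sup>2 * sqnorm d (g k m)"
    by (simp add: sqnorm_diff sqnorm_scale ip_scale_right ip_commute)
  also have "(\<alpha> k)\<^sup>2 * sqnorm d (g k m) \<le> (\<alpha> k * L)\<^sup>2"
    using sqnorm_le_power2[OF g_norm_le[OF k m]] by (simp add: power_mult_distrib mult_left_mono)
  finally show ?thesis
    by simp
qed


definition mean_sq_dist :: "nat \<Rightarrow> real" where
  "mean_sq_dist k = (1 / real n) * (\<Sum>i<n. sqnorm d (vdiff (x k i) xs))"

lemma mean_sq_dist_nonneg: "0 \<le> mean_sq_dist k"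
  unfolding mean_sq_dist_def by (simp add: sum_nonneg sqnorm_nonneg)

lemma mean_sq_dist_le: "1 \<le> k \<Longrightarrow> mean_sq_dist k \<le> D\<^sup>2"
proof -
  assume k: "1 \<le> k"
  have "(\<Sum>i<n. sqnorm d (vdiff (x k i) xs)) \<le> (\<Sum>i<n. D\<^sup>2)"
    using sqnorm_le_power2[OF diam_\<Omega>[OF x_in_\<Omega>[OF k] xs_in_\<Omega>]] by (intro sum_mono) simp
  then show ?thesis
    unfolding mean_sq_dist_def using two_le_n by (simp add: field_simps)
qed

lemma mixed_sq_dist_le:
  assumes k: "1 \<le> k" and i: "i < n"
  shows "sqnorm d (vdiff (x (Suc k) i) xs) \<le> (\<Sum>m<n. W i m * sqnorm d (vdiff (local_step k m) xs))"
proof -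
  have "x (Suc k) i j - xs j = (\<Sum>m<n. W i m * (local_step k m j - xs j))" for j
    using x_Suc_eq[OF k i] W_row_sum[OF i]
    by (simp add: right_diff_distrib sum_subtractf sum_distrib_right[symmetric])
  then have "sqnorm d (vdiff (x (Suc k) i) xs) = (\<Sum>j<d. (\<Sum>m<n. W i m * (local_step k m j - xs j))\<^sup>2)"
    unfolding sqnorm_def vdiff_def by simp
  also have "\<dots> \<le> (\<Sum>j<d. \<Sum>m<n. W i m * (local_step k m j - xs j)\<^sup>2)"
    using W_nonneg W_row_sum i by (intro sum_mono weighted_mean_power2_le) auto
  also have "\<dots> = (\<Sum>m<n. W i m * sqnorm d (vdiff (local_step k m) xs))"
    unfolding sqnorm_def vdiff_def by (subst sum.swap) (simp add: sum_distrib_left)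
  finally show ?thesis .
qed

lemma mean_sq_dist_Suc_le:
  assumes k: "1 \<le> k"
  shows "mean_sq_dist (Suc k)
    \<le> mean_sq_dist k - (2 * \<alpha> k / real n) * (\<Sum>i<n. ip d (g k i) (vdiff (x k i) xs)) + (\<alpha> k * L)\<^sup>2"
proof -
  have "(\<Sum>i<n. sqnorm d (vdiff (x (Suc k) i) xs)) \<le> (\<Sum>i<n. \<Sum>m<n. W i m * sqnorm d (vdiff (local_step k m) xs))"
    using mixed_sq_dist_le[OF k] by (intro sum_mono) simp
  also have "\<dots> = (\<Sum>m<n. sqnorm d (vdiff (local_step k m) xs))"
    using W_col_sum by (subst sum.swap) (simp add: sum_distrib_right[symmetric])
  also have "\<dots> \<le> (\<Sum>m<n. sqnorm d (vdiff (x k m) xs) - 2 * \<alpha> k * ip d (g k m) (vdiff (x k m) xs) + (\<alpha> k * L)\<^sup>2)"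
    using local_step_descent[OF k] by (intro sum_mono) simp
  also have "\<dots> = (\<Sum>m<n. sqnorm d (vdiff (x k m) xs)) - 2 * \<alpha> k * (\<Sum>m<n. ip d (g k m) (vdiff (x k m) xs))
      + real n * (\<alpha> k * L)\<^sup>2"
    by (simp add: sum.distrib sum_subtractf sum_distrib_left)
  finally show ?thesis
    unfolding mean_sq_dist_def using two_le_n by (simp add: field_simps)
qed

definition consensus_error :: "nat \<Rightarrow> real" where
  "consensus_error k = (\<Sum>i<n. sqnorm d (vdiff (x k i) (xbar n x k)))"

lemma consensus_error_1: "consensus_error 1 = 0"
proof -
  obtain x0 where x0: "\<And>i. i < n \<Longrightarrow> x 1 i = x0"
    using x_1 by blast
  then have "xbar n x 1 = x0"
    using two_le_n unfolding xbar_def by (simp add: fun_eq_iff)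
  then show ?thesis
    unfolding consensus_error_def using x0 by (simp add: sqnorm_def vdiff_def)
qed

lemma xbar_Suc: "1 \<le> k \<Longrightarrow> xbar n x (Suc k) = xbar n local_step k"
  unfolding xbar_def using x_Suc_eq W_col_sum
  by (simp add: fun_eq_iff sum.swap[of _ "{..<n}"] sum_distrib_right[symmetric])

text \<open>The all-ones direction is invariant under mixing, so only the disagreement of the local
  steps is contracted by \<open>\<sigma>\<close>.\<close>
lemma consensus_error_Suc_le:
  assumes k: "1 \<le> k"
  shows "consensus_error (Suc k) \<le> \<sigma>\<^sup>2 * (\<Sum>m<n. sqnorm d (vdiff (local_step k m) (xbar n local_step k)))"
proof -
  let ?Y = "xbar n local_step k"
  have "x (Suc k) i j - xbar n x (Suc k) j = (\<Sum>m<n. W i m * (local_step k m j - ?Y j))" if "i < n" for i j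
    using x_Suc_eq[OF k that] W_row_sum[OF that] xbar_Suc[OF k]
    by (simp add: right_diff_distrib sum_subtractf sum_distrib_right[symmetric])
  then have "consensus_error (Suc k) = (\<Sum>j<d. \<Sum>i<n. (\<Sum>m<n. W i m * (local_step k m j - ?Y j))\<^sup>2)"
    unfolding consensus_error_def sqnorm_def vdiff_def by (subst sum.swap) simp
  also have "\<dots> \<le> (\<Sum>j<d. \<sigma>\<^sup>2 * (\<Sum>m<n. (local_step k m j - ?Y j)\<^sup>2))"
  proof (rule sum_mono)
    fix j
    have "(\<Sum>m<n. local_step k m j - ?Y j) = 0"
      unfolding xbar_def using two_le_n by (simp add: sum_subtractf)
    then show "(\<Sum>i<n. (\<Sum>m<n. W i m * (local_step k m j - ?Y j))\<^sup>2) \<le> \<sigma>\<^sup>2 * (\<Sum>m<n. (local_step k m j - ?Y j)\<^sup>2)"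
      by (rule second_singular_value_contraction[OF W_second_singular_value W_doubly_stochastic \<sigma>_less_1])
  qed
  also have "\<dots> = \<sigma>\<^sup>2 * (\<Sum>m<n. sqnorm d (vdiff (local_step k m) ?Y))"
    unfolding sqnorm_def vdiff_def by (simp add: sum_distrib_left sum.swap[of _ "{..<d}"])
  finally show ?thesis .
qed

lemma local_step_spread_le:
  assumes k: "1 \<le> k"
  shows "sqrt (\<Sum>m<n. sqnorm d (vdiff (local_step k m) (xbar n local_step k)))
    \<le> sqrt (consensus_error k) + sqrt (real n) * (\<alpha> k * L)"
proof -
  define a where "a m j = x k m j - xbar n x k j" for m j
  define e where "e m j = local_step k m j - x k m j" for m j
  define b where "b m j = e m j - (1 / real n) * (\<Sum>l<n. e l j)" for m j
  have "local_step k m j - xbar n local_step k j = a m j + b m j" for m j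
    unfolding a_def b_def e_def xbar_def by (simp add: sum_subtractf right_diff_distrib)
  then have "sqrt (\<Sum>m<n. sqnorm d (vdiff (local_step k m) (xbar n local_step k)))
      \<le> sqrt (\<Sum>m<n. \<Sum>j<d. (a m j)\<^sup>2) + sqrt (\<Sum>m<n. \<Sum>j<d. (b m j)\<^sup>2)"
    unfolding sqnorm_def vdiff_def by (simp add: sqrt_double_sum_add_le)
  also have "(\<Sum>m<n. \<Sum>j<d. (a m j)\<^sup>2) = consensus_error k"
    unfolding consensus_error_def sqnorm_def vdiff_def a_def ..
  also have "(\<Sum>m<n. \<Sum>j<d. (b m j)\<^sup>2) \<le> real n * (\<alpha> k * L)\<^sup>2"
  proof -
    have "(\<Sum>m<n. \<Sum>j<d. (b m j)\<^sup>2) \<le> (\<Sum>j<d. \<Sum>m<n. (e m j)\<^sup>2)"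
      unfolding b_def by (subst sum.swap) (intro sum_mono sum_power2_deviation_le)
    also have "\<dots> = (\<Sum>m<n. sqnorm d (vdiff (local_step k m) (x k m)))"
      unfolding sqnorm_def vdiff_def e_def by (rule sum.swap)
    also have "\<dots> \<le> (\<Sum>m<n. (\<alpha> k * L)\<^sup>2)"
      using local_step_dist_le[OF k] by (intro sum_mono) simp
    finally show ?thesis
      by simp
  qed
  then have "sqrt (\<Sum>m<n. \<Sum>j<d. (b m j)\<^sup>2) \<le> sqrt (real n) * (\<alpha> k * L)"
    using \<alpha>_pos[OF k] L_nonneg real_sqrt_le_mono by (fastforce simp: real_sqrt_mult)
  finally show ?thesis
    by simp
qed

lemma sqrt_consensus_error_le: "1 \<le> k \<Longrightarrow> sqrt (consensus_error k) \<le> sqrt (real n) * L * discounted_steps \<sigma> \<alpha> k"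
proof (induction k rule: nat_induct_at_least)
  case base
  then show ?case
    using consensus_error_1 discounted_steps_1[of \<sigma> \<alpha>] by simp
next
  case (Suc k)
  have "sqrt (consensus_error (Suc k))
      \<le> \<sigma> * sqrt (\<Sum>m<n. sqnorm d (vdiff (local_step k m) (xbar n local_step k)))"
    using consensus_error_Suc_le[OF Suc.hyps] \<sigma>_nonneg real_sqrt_le_mono by (fastforce simp: real_sqrt_mult)
  also have "\<dots> \<le> \<sigma> * (sqrt (consensus_error k) + sqrt (real n) * (\<alpha> k * L))"
    using local_step_spread_le[OF Suc.hyps] \<sigma>_nonneg by (rule mult_left_mono)
  also have "\<dots> \<le> \<sigma> * (sqrt (real n) * L * discounted_steps \<sigma> \<alpha> k + sqrt (real n) * (\<alpha> k * L))"
    using Suc.IH \<sigma>_nonneg by (intro mult_left_mono) auto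
  also have "\<dots> = sqrt (real n) * L * discounted_steps \<sigma> \<alpha> (Suc k)"
    using discounted_steps_Suc[OF Suc.hyps] by (simp add: algebra_simps)
  finally show ?case .
qed

lemma mean_deviation_le:
  assumes k: "1 \<le> k"
  shows "(1 / real n) * (\<Sum>i<n. enorm d (vdiff (x k i) (xbar n x k))) \<le> L * discounted_steps \<sigma> \<alpha> k"
proof -
  define a where "a i = enorm d (vdiff (x k i) (xbar n x k))" for i
  have n: "0 < real n"
    using two_le_n by simp
  have "((1 / real n) * (\<Sum>i<n. a i))\<^sup>2 \<le> (\<Sum>i<n. (1 / real n) * (a i)\<^sup>2)"
    using weighted_mean_power2_le[of n "\<lambda>_. 1 / real n" a] n by (simp add: sum_distrib_left)
  also have "\<dots> = consensus_error k / real n"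
    unfolding a_def consensus_error_def by (simp add: enorm_power2 sum_divide_distrib)
  finally have "(1 / real n) * (\<Sum>i<n. a i) \<le> sqrt (consensus_error k / real n)"
    by (rule real_le_rsqrt)
  also have "\<dots> = sqrt (consensus_error k) / sqrt (real n)"
    by (rule real_sqrt_divide)
  also have "\<dots> \<le> (sqrt (real n) * L * discounted_steps \<sigma> \<alpha> k) / sqrt (real n)"
    using sqrt_consensus_error_le[OF k] by (intro divide_right_mono) auto
  also have "\<dots> = L * discounted_steps \<sigma> \<alpha> k"
    using n by simp
  finally show ?thesis
    unfolding a_def .
qed


lemma gap_step_le:
  assumes k: "1 \<le> k"
  shows "2 * \<alpha> k * (Favg n f (xbar n x k) - Favg n f xs)
    \<le> mean_sq_dist k - mean_sq_dist (Suc k) + (\<alpha> k * L)\<^sup>2 + 2 * \<alpha> k * L\<^sup>2 * discounted_steps \<sigma> \<alpha> k"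
proof -
  have xs_Rd: "xs \<in> Rd d"
    using xs_in_\<Omega> \<Omega>_subset_Rd by blast
  have "f i (xbar n x k) - f i xs - L * enorm d (vdiff (x k i) (xbar n x k)) \<le> ip d (g k i) (vdiff (x k i) xs)"
    if i: "i < n" for i
  proof -
    have "f i (x k i) - f i xs \<le> ip d (g k i) (vdiff (x k i) xs)"
      using g_subgrad[OF k i] xs_Rd ip_vdiff_swap[of d "g k i" xs "x k i"] unfolding subgrad_def by force
    moreover have "f i (xbar n x k) - f i (x k i) \<le> L * enorm d (vdiff (xbar n x k) (x k i))"
      by (rule lipschitz_of_bounded_subgrad[OF convex_f[OF i] x_in_Rd[OF k i] xbar_in_Rd[OF k] subgrad_bounded[OF i]])
    ultimately show ?thesis
      by (simp add: enorm_vdiff_commute)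
  qed
  then have "(1 / real n) * (\<Sum>i<n. f i (xbar n x k) - f i xs - L * enorm d (vdiff (x k i) (xbar n x k)))
      \<le> (1 / real n) * (\<Sum>i<n. ip d (g k i) (vdiff (x k i) xs))"
    by (intro mult_left_mono sum_mono) auto
  then have "Favg n f (xbar n x k) - Favg n f xs - L * ((1 / real n) * (\<Sum>i<n. enorm d (vdiff (x k i) (xbar n x k))))
      \<le> (1 / real n) * (\<Sum>i<n. ip d (g k i) (vdiff (x k i) xs))"
    unfolding Favg_def by (simp add: sum_subtractf sum_distrib_left right_diff_distrib mult_ac)
  moreover have "L * ((1 / real n) * (\<Sum>i<n. enorm d (vdiff (x k i) (xbar n x k)))) \<le> L * (L * discounted_steps \<sigma> \<alpha> k)"
    using mean_deviation_le[OF k] L_nonneg by (rule mult_left_mono)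
  ultimately have "Favg n f (xbar n x k) - Favg n f xs - L * (L * discounted_steps \<sigma> \<alpha> k)
      \<le> (1 / real n) * (\<Sum>i<n. ip d (g k i) (vdiff (x k i) xs))"
    by linarith
  then have "2 * \<alpha> k * (Favg n f (xbar n x k) - Favg n f xs)
      \<le> 2 * \<alpha> k * ((1 / real n) * (\<Sum>i<n. ip d (g k i) (vdiff (x k i) xs)) + L\<^sup>2 * discounted_steps \<sigma> \<alpha> k)"
    using \<alpha>_pos[OF k] by (intro mult_left_mono) (auto simp: power2_eq_square)
  then show ?thesis
    using mean_sq_dist_Suc_le[OF k] by (simp add: algebra_simps)
qed

lemma window_gap_le:
  assumes "2 \<le> t"
  shows "2 * (\<Sum>k=t div 2..t. \<alpha> k * (Favg n f (xbar n x k) - Favg n f xs))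
    \<le> D\<^sup>2 + L\<^sup>2 * (\<Sum>k=t div 2..t. (\<alpha> k)\<^sup>2) + 2 * L\<^sup>2 * (\<Sum>k=t div 2..t. \<alpha> k * discounted_steps \<sigma> \<alpha> k)"
proof -
  have t: "1 \<le> t div 2"
    using assms by simp
  have telescope: "(\<Sum>k=t div 2..t. mean_sq_dist k - mean_sq_dist (Suc k)) = mean_sq_dist (t div 2) - mean_sq_dist (Suc t)"
  proof -
    have "t div 2 \<le> Suc t"
      by presburger
    then show ?thesis
      using sum_Suc_diff[of "t div 2" t mean_sq_dist] by (simp add: sum_subtractf)
  qed
  have "2 * (\<Sum>k=t div 2..t. \<alpha> k * (Favg n f (xbar n x k) - Favg n f xs))
      \<le> (\<Sum>k=t div 2..t. (mean_sq_dist k - mean_sq_dist (Suc k))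
          + ((\<alpha> k * L)\<^sup>2 + 2 * \<alpha> k * L\<^sup>2 * discounted_steps \<sigma> \<alpha> k))"
    unfolding sum_distrib_left using gap_step_le t by (intro sum_mono) (auto simp: mult.assoc add.assoc)
  also have "\<dots> = mean_sq_dist (t div 2) - mean_sq_dist (Suc t) + L\<^sup>2 * (\<Sum>k=t div 2..t. (\<alpha> k)\<^sup>2)
      + 2 * L\<^sup>2 * (\<Sum>k=t div 2..t. \<alpha> k * discounted_steps \<sigma> \<alpha> k)"
    unfolding telescope[symmetric] by (simp add: sum.distrib sum_distrib_left power_mult_distrib mult_ac)
  also have "\<dots> \<le> D\<^sup>2 + L\<^sup>2 * (\<Sum>k=t div 2..t. (\<alpha> k)\<^sup>2) + 2 * L\<^sup>2 * (\<Sum>k=t div 2..t. \<alpha> k * discounted_steps \<sigma> \<alpha> k)"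
    using mean_sq_dist_le[OF t] mean_sq_dist_nonneg[of "Suc t"] by simp
  finally show ?thesis .
qed

lemma window_weight_pos: "2 \<le> t \<Longrightarrow> 0 < (\<Sum>k=t div 2..t. \<alpha> k)"
  using \<alpha>_pos by (intro sum_pos) auto

lemma weighted_Favg_xalpha_le:
  assumes "2 \<le> t"
  shows "(\<Sum>k=t div 2..t. \<alpha> k) * Favg n f (xalpha n \<alpha> x t) \<le> (\<Sum>k=t div 2..t. \<alpha> k * Favg n f (xbar n x k))"
proof -
  define K where "K = {t div 2..t}"
  define xa where "xa = xalpha n \<alpha> x t"
  have K: "k \<in> K \<Longrightarrow> 1 \<le> k" for k
    using assms unfolding K_def by auto
  have mean: "(\<Sum>k\<in>K. \<alpha> k) * xa j = (\<Sum>k\<in>K. \<alpha> k * xbar n x k j)" for j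
    unfolding xa_def xalpha_def K_def using window_weight_pos[OF assms] by simp
  have xa_Rd: "xa \<in> Rd d"
    using xbar_in_Rd K unfolding xa_def xalpha_def Rd_def K_def by auto
  have each: "(\<Sum>k\<in>K. \<alpha> k) * f i xa \<le> (\<Sum>k\<in>K. \<alpha> k * f i (xbar n x k))" if "i < n" for i
    by (rule cvx_fun_weighted_mean_le[OF convex_f[OF that] _ _ xa_Rd mean])
      (use K \<alpha>_pos xbar_in_Rd in \<open>auto intro: less_imp_le\<close>)
  have "(\<Sum>k\<in>K. \<alpha> k) * Favg n f xa = (1 / real n) * (\<Sum>i<n. (\<Sum>k\<in>K. \<alpha> k) * f i xa)"
    unfolding Favg_def by (simp add: sum_distrib_left mult_ac)
  also have "\<dots> \<le> (1 / real n) * (\<Sum>i<n. \<Sum>k\<in>K. \<alpha> k * f i (xbar n x k))"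
    by (intro mult_left_mono sum_mono each) auto
  also have "\<dots> = (\<Sum>k\<in>K. \<alpha> k * Favg n f (xbar n x k))"
    unfolding Favg_def by (subst sum.swap) (simp add: sum_distrib_left mult_ac)
  finally show ?thesis
    unfolding K_def xa_def .
qed

lemma gap_le:
  assumes "2 \<le> t"
  shows "Favg n f (xalpha n \<alpha> x t) - Favg n f xs \<le>
    (D\<^sup>2 + L\<^sup>2 * (\<Sum>k=t div 2..t. (\<alpha> k)\<^sup>2) + 2 * L\<^sup>2 * (\<Sum>k=t div 2..t. \<alpha> k * discounted_steps \<sigma> \<alpha> k))
      / (2 * (\<Sum>k=t div 2..t. \<alpha> k))"
proof -
  define A where "A = (\<Sum>k=t div 2..t. \<alpha> k)"
  have "A * (Favg n f (xalpha n \<alpha> x t) - Favg n f xs)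
      \<le> (\<Sum>k=t div 2..t. \<alpha> k * (Favg n f (xbar n x k) - Favg n f xs))"
    using weighted_Favg_xalpha_le[OF assms] unfolding A_def
    by (simp add: right_diff_distrib sum_subtractf sum_distrib_right)
  then show ?thesis
    using window_gap_le[OF assms] window_weight_pos[OF assms] unfolding A_def
    by (simp add: pos_le_divide_eq mult_ac)
qed

text \<open>For \<open>D = 0\<close> the hypothesis on \<open>L\<close> in the \<open>k\<^sup>-\<^sup>\<beta>\<close> rate is void (division by zero gives
  \<open>0\<close>), so this case is handled separately: then \<open>\<Omega> = {xs}\<close>.\<close>
lemma gap_nonpos_if_diam_zero:
  assumes "D = 0" and "2 \<le> t"
  shows "Favg n f (xalpha n \<alpha> x t) - Favg n f xs \<le> 0"
proof -
  have "xbar n x k = xs" if "k \<in> {t div 2..t}" for k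
    using that assms \<Omega>_subset_Rd xs_in_\<Omega> xbar_in_\<Omega>[of k] diam_\<Omega>[of "xbar n x k" xs]
    by (intro Rd_eqI) auto
  then have "xalpha n \<alpha> x t = xs"
    using window_weight_pos[OF assms(2)]
    by (simp add: xalpha_def fun_eq_iff sum_distrib_right[symmetric])
  then show ?thesis
    by simp
qed

end

section \<open>Convergence rates\<close>

context dsgd
begin

lemma gap_le_general_rate:
  assumes Ca: "\<And>t. 1 \<le> t \<Longrightarrow> (\<Sum>k=1..t. \<alpha> k) \<le> Ca * (\<Sum>k=(t + 1) div 2..t. \<alpha> k)"
    and Ca': "\<And>t. 2 \<le> t \<Longrightarrow> \<alpha> (t div 2) \<le> Ca' * \<alpha> t"
    and summable: "summable (\<lambda>k. (\<alpha> (Suc k))\<^sup>2)" and t: "2 \<le> t"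
    and tail: "(\<Sum>k. (\<alpha> (k + t div 2))\<^sup>2) \<le> D\<^sup>2 * (1 - \<sigma>) / (10 * Ca' * L\<^sup>2)"
    and log: "4 / (1 - \<sigma>) * ln ((1 - \<sigma>) * real t * (SUP k\<in>{1..}. \<alpha> k) / (Ca' * \<alpha> t)) \<le> real t"
  shows "Favg n f (xalpha n \<alpha> x t) - Favg n f xs \<le> D\<^sup>2 * Ca / (\<Sum>k=1..t. \<alpha> k)"
proof -
  let ?A = "\<Sum>k=t div 2..t. \<alpha> k"
  have "Favg n f (xalpha n \<alpha> x t) - Favg n f xs
      \<le> (D\<^sup>2 + L\<^sup>2 * (\<Sum>k=t div 2..t. (\<alpha> k)\<^sup>2) + 2 * L\<^sup>2 * (\<Sum>k=t div 2..t. \<alpha> k * discounted_steps \<sigma> \<alpha> k))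
        / (2 * ?A)"
    by (rule gap_le[OF t])
  also have "\<dots> \<le> (D\<^sup>2 + D\<^sup>2) / (2 * ?A)"
    using window_errors_le_general[OF Ca' summable t log tail] window_weight_pos[OF t]
    by (intro divide_right_mono) auto
  also have "\<dots> = D\<^sup>2 * (1 / ?A)"
    by simp
  also have "\<dots> \<le> D\<^sup>2 * (Ca / (\<Sum>k=1..t. \<alpha> k))"
    using window_sum_inverse_le[OF Ca t] zero_le_power2 by (rule mult_left_mono)
  finally show ?thesis
    by simp
qed

lemma gap_le_inverse_powr_rate:
  assumes \<alpha>_def: "\<alpha> = (\<lambda>k. 1 / real k powr \<beta>)" and \<beta>: "1/2 < \<beta>" "\<beta> < 1" and t: "2 \<le> t"
    and L: "L\<^sup>2 / (D\<^sup>2 * (1 - \<sigma>)) \<le> real t powr (2 * \<beta> - 1)"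
  shows "Favg n f (xalpha n \<alpha> x t) - Favg n f xs \<le> (64 + 18 / (1 - \<beta>)) * D\<^sup>2 / real t powr (1 - \<beta>)"
proof (cases "D = 0")
  case True
  then show ?thesis
    using gap_nonpos_if_diam_zero[OF True t] by simp
next
  case False
  let ?A = "\<Sum>k=t div 2..t. \<alpha> k" and ?tb = "real t powr \<beta>"
  have \<beta>0: "0 < \<beta>" and tb: "0 < ?tb"
    using \<beta> t by auto
  have A: "real t / ?tb \<le> 2 * ?A"
    using inverse_powr_window_bounds(1)[OF \<alpha>_def \<beta>0 \<beta>(2) t] tb by (simp add: field_simps)
  have "Favg n f (xalpha n \<alpha> x t) - Favg n f xs
      \<le> (D\<^sup>2 + L\<^sup>2 * (\<Sum>k=t div 2..t. (\<alpha> k)\<^sup>2) + 2 * L\<^sup>2 * (\<Sum>k=t div 2..t. \<alpha> k * discounted_steps \<sigma> \<alpha> k))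
        / (2 * ?A)"
    by (rule gap_le[OF t])
  also have "\<dots> \<le> (D\<^sup>2 + (63 + 18 / (1 - \<beta>)) * D\<^sup>2) / (2 * ?A)"
    using window_errors_le_inverse_powr[OF \<alpha>_def \<beta>0 \<beta>(2) t False L] window_weight_pos[OF t]
    by (intro divide_right_mono) auto
  also have "\<dots> = (64 + 18 / (1 - \<beta>)) * D\<^sup>2 / (2 * ?A)"
    by (simp add: algebra_simps)
  also have "\<dots> \<le> (64 + 18 / (1 - \<beta>)) * D\<^sup>2 / (real t / ?tb)"
  proof (rule divide_left_mono)
    show "0 \<le> (64 + 18 / (1 - \<beta>)) * D\<^sup>2"
      using \<beta> zero_le_power2[of D] by (intro mult_nonneg_nonneg add_nonneg_nonneg) auto
  qed (use A tb t window_weight_pos[OF t] in auto)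
  also have "real t / ?tb = real t powr (1 - \<beta>)"
    using t by (simp add: powr_diff)
  finally show ?thesis .
qed

end


lemma dsgd_setting_imp_dsgd:
  assumes "dsgd_setting n d f L \<Omega> D W \<sigma> \<alpha> Ca Ca' x g xs"
  shows "dsgd \<sigma> \<alpha> n d f L \<Omega> D W x g xs"
proof -
  have "second_singular_value n W \<sigma>" and "2 \<le> n"
    using assms unfolding dsgd_setting_def by simp_all
  then have "0 \<le> \<sigma>"
    by (rule second_singular_value_nonneg)
  with assms show ?thesis
    unfolding dsgd_setting_def
    by (intro dsgd.intro step_sizes.intro dsgd_axioms.intro) simp_all
qed

lemma dsgd_setting_general_rate:
  assumes setting: "dsgd_setting n d f L \<Omega> D W \<sigma> \<alpha> Ca Ca' x g xs" and "2 \<le> t"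
    and "(\<Sum>k. (\<alpha> (k + t div 2))\<^sup>2) \<le> D\<^sup>2 * (1 - \<sigma>) / (10 * Ca' * L\<^sup>2)"
    and "4 / (1 - \<sigma>) * ln ((1 - \<sigma>) * real t * (SUP k\<in>{1..}. \<alpha> k) / (Ca' * \<alpha> t)) \<le> real t"
  shows "Favg n f (xalpha n \<alpha> x t) - Favg n f xs \<le> D\<^sup>2 * Ca / (\<Sum>k=1..t. \<alpha> k)"
  by (rule dsgd.gap_le_general_rate[OF dsgd_setting_imp_dsgd[OF setting]])
    (use assms in \<open>simp_all add: dsgd_setting_def\<close>)

lemma dsgd_setting_inverse_powr_rate:
  assumes "dsgd_setting n d f L \<Omega> D W \<sigma> \<alpha> Ca Ca' x g xs" and "\<alpha> = (\<lambda>k. 1 / real k powr \<beta>)"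
    and "1/2 < \<beta>" and "\<beta> < 1" and "2 \<le> t" and "L\<^sup>2 / (D\<^sup>2 * (1 - \<sigma>)) \<le> real t powr (2 * \<beta> - 1)"
  shows "Favg n f (xalpha n \<alpha> x t) - Favg n f xs \<le> (64 + 18 / (1 - \<beta>)) * D\<^sup>2 / real t powr (1 - \<beta>)"
  by (rule dsgd.gap_le_inverse_powr_rate[OF dsgd_setting_imp_dsgd assms(2-)]) (rule assms(1))

theorem theorem1:
  shows "\<exists>c>0.
       (\<forall>n d f L \<Omega> D W \<sigma> \<alpha> Ca Ca' x g xs (t::nat).
            dsgd_setting n d f L \<Omega> D W \<sigma> \<alpha> Ca Ca' x g xs \<and> 2 \<le> t \<and>
            (\<Sum>k. (\<alpha> (k + t div 2))\<^sup>2) \<le> D\<^sup>2 * (1 - \<sigma>) / (10 * Ca' * L\<^sup>2) \<and>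
            real t \<ge> c / (1 - \<sigma>) *
               ln ((1 - \<sigma>) * real t * (SUP k\<in>{1..}. \<alpha> k) / (Ca' * \<alpha> t))
          \<longrightarrow> Favg n f (xalpha n \<alpha> x t) - Favg n f xs \<le> D\<^sup>2 * Ca / (\<Sum>k=1..t. \<alpha> k))
       \<and>
       (\<forall>\<beta>::real. 1/2 < \<beta> \<and> \<beta> < 1 \<longrightarrow>
          (\<exists>c\<beta>>0. \<exists>C\<beta>>0. \<forall>n d f L \<Omega> D W \<sigma> \<alpha> Ca Ca' x g xs (t::nat).
            \<alpha> = (\<lambda>k. 1 / (real k powr \<beta>)) \<and>
            dsgd_setting n d f L \<Omega> D W \<sigma> \<alpha> Ca Ca' x g xs \<and> 2 \<le> t \<and>
            real t \<ge> c / (1 - \<sigma>) *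
               ln ((1 - \<sigma>) * real t * (SUP k\<in>{1..}. \<alpha> k) / (Ca' * \<alpha> t)) \<and>
            real t powr (2 * \<beta> - 1) \<ge> c\<beta> * L\<^sup>2 / (D\<^sup>2 * (1 - \<sigma>))
          \<longrightarrow> Favg n f (xalpha n \<alpha> x t) - Favg n f xs \<le> C\<beta> * D\<^sup>2 / real t powr (1 - \<beta>)))"
  apply (rule exI[of _ "4::real"], intro conjI allI impI)
    apply simp
   apply (blast intro: dsgd_setting_general_rate)
  subgoal for \<beta>
    by (rule exI[of _ 1], simp, rule exI[of _ "64 + 18 / (1 - \<beta>)"])
      (auto simp: add_pos_pos dsgd_setting_inverse_powr_rate)
  done

end
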